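(* Let $(H,\cdot,1,\Delta,\epsilon,S,\rightharpoonup)$ be a Yetter--Drinfeld post-Hopf algebra with subadjacent Hopf algebra $H_\rightharpoonup=(H,\bullet_\rightharpoonup,1,\Delta,\epsilon,S_\rightharpoonup)$, and regard $(H,\cdot,1,\Delta,\epsilon,S)$ as a Hopf monoid in ${}^{H_\rightharpoonup}_{H_\rightharpoonup}\mathcal{YD}$ with action $\rightharpoonup$ and coaction $a\mapsto a_1\bullet_\rightharpoonup S_\rightharpoonup(a_3)\otimes a_2$. Then the identity map $\mathrm{Id}_H:H\to H_\rightharpoonup$ is a Yetter--Drinfeld relative Rota--Baxter operator on $H_\rightharpoonup$ with respect to $(H,\rightharpoonup)$. Moreover, if $g:(H,\rightharpoonup)\to(H',\rightharpoonup')$ is a morphism of Yetter--Drinfeld post-Hopf algebras, then $(g:H_\rightharpoonup\to H'_{\rightharpoonup'},\,g:H\to H')$ is a morphism of Yetter--Drinfeld relative Rota--Baxter operators from $\mathrm{Id}_H$ to $\mathrm{Id}_{H'}$. This yields a functor $L:\mathcal{YD}\mathrm{PH}(\mathrm{Vec}_\Bbbk)\to\mathcal{YD}\mathrm{rRB}(\mathrm{Vec}_\Bbbk)$.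
   Context: Conventions: $\Bbbk$ is a field; algebras are associative unital, coalgebras coassociative counital; Sweedler notation $\Delta(c)=c_1\otimes c_2$ (summation omitted), iterated as $c_1\otimes c_2\otimes c_3$ etc.; $H\otimes H$ carries the tensor product coalgebra structure. Definition (Yetter--Drinfeld post-Hopf algebra). A tuple $(H,\cdot,1,\Delta,\epsilon,S,\rightharpoonup)$ where $(H,\cdot,1)$ is an algebra, $(H,\Delta,\epsilon)$ is a coalgebra on the same vector space, $S:H\to H$ is linear with $x_1\cdot S(x_2)=S(x_1)\cdot x_2=\epsilon(x)1$ for all $x$, and $\rightharpoonup:H\otimes H\to H$ is a coalgebra morphism, such that for all $x,y,z\in H$: (P1) $x\rightharpoonup(y\cdot z)=(x_1\rightharpoonup y)\cdot(x_2\rightharpoonup z)$; (P2) $x\rightharpoonup(y\rightharpoonup z)=\big(x_1\cdot(x_2\rightharpoonup y)\big)\rightharpoonup z$; (P3) the map $\alpha_\rightharpoonup:H\to\mathrm{End}(H)$, $\alpha_\rightharpoonup(x)(y)=x\rightharpoonup y$, is convolution invertible, i.e. there is $\beta_\rightharpoonup:H\to\mathrm{End}(H)$ with $\alpha_\rightharpoonup(x_1)\circ\beta_\rightharpoonup(x_2)=\beta_\rightharpoonup(x_1)\circ\alpha_\rightharpoonup(x_2)=\epsilon(x)\mathrm{Id}_H$; (P4) $\epsilon(a\cdot b)=\epsilon(a)\epsilon(b)$, $\epsilon(1)=1_\Bbbk$, $\Delta(1)=1\otimes 1$; (P5) $\Delta(x\cdot y)=\Big(x_1\cdot\alpha_\rightharpoonup(x_2)\big(\beta_\rightharpoonup(x_4)(y_1)\big)\Big)\otimes(x_3\cdot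 y_2)$; (P6) setting $x\bullet_\rightharpoonup y:=x_1\cdot(x_2\rightharpoonup y)$, $S_\rightharpoonup(x):=\beta_\rightharpoonup(x_1)(S(x_2))$ and $x\leftharpoonup y:=\big(S_\rightharpoonup(x_1\rightharpoonup y_1)\bullet_\rightharpoonup x_2\big)\bullet_\rightharpoonup y_2$, one has $\Delta(S_\rightharpoonup(x))=S_\rightharpoonup(x_2)\otimes S_\rightharpoonup(x_1)$ and $(x_1\rightharpoonup y_1)\otimes(x_2\leftharpoonup y_2)=(x_2\rightharpoonup y_2)\otimes(x_1\leftharpoonup y_1)$. A morphism of Yetter--Drinfeld post-Hopf algebras $(H,\rightharpoonup)\to(H',\rightharpoonup')$ is an algebra and coalgebra morphism $g$ with $g(x\rightharpoonup y)=g(x)\rightharpoonup' g(y)$; these form $\mathcal{YD}\mathrm{PH}(\mathrm{Vec}_\Bbbk)$. Facts: $H_\rightharpoonup$ is a Hopf algebra and, with the stated action and coaction, $(H,\cdot,1,\Delta,\epsilon,S)$ is a Hopf monoid in ${}^{H_\rightharpoonup}_{H_\rightharpoonup}\mathcal{YD}$. Yetter--Drinfeld modules: for a Hopf algebra $A$ with antipode $T$, a left-left Yetter--Drinfeld module is a left $A$-module $(V,\triangleright)$ and left $A$-comodule $\rho(v)=v_{-1}\otimes v_0$ with $\rho(a\triangleright v)=a_1v_{-1}T(a_3)\otimes a_2\triangleright v_0$; these form the braided monoidal category ${}^A_A\mathcal{YD}$ with braiding $\sigma(v\otimes w)=v_{-1}\triangleright w\otimes v_0$. A bimonoid in ${}^A_A\mathcal{YD}$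 is an object with algebra and coalgebra structure maps in ${}^A_A\mathcal{YD}$, $\epsilon$ multiplicative, $\epsilon(1)=1$, $\Delta(1)=1\otimes1$, and $\Delta\circ m=(m\otimes m)(\mathrm{Id}\otimes\sigma\otimes\mathrm{Id})(\Delta\otimes\Delta)$; a Hopf monoid is a bimonoid with antipode. Definition (Yetter--Drinfeld relative (pre-)Rota--Baxter operator). Let $(H,\cdot,1,\Delta,\epsilon,S_H)$ be a Hopf algebra and $(K,\cdot_K,1_K,\Delta,\epsilon)$ a bimonoid in ${}^H_H\mathcal{YD}$ with $H$-action $\rightharpoonup$. A coalgebra morphism $R:K\to H$ is a Yetter--Drinfeld relative pre-Rota--Baxter operator if for all $a,b\in K$: (RB1) $R(a)\cdot R(b)=R\big(a_1\cdot_K(R(a_2)\rightharpoonup b)\big)$; (RB2) $S_HR(R(a_1)\rightharpoonup b_1)\cdot R(a_2)\cdot R(b_2)\otimes R(R(a_3)\rightharpoonup b_3)=S_HR(R(a_2)\rightharpoonup b_2)\cdot R(a_3)\cdot R(b_3)\otimes R(R(a_1)\rightharpoonup b_1)$. It is a Yetter--Drinfeld relative Rota--Baxter operator if moreover $R$ is bijective and (RB3) $\big(a_1\rightharpoonup R^{-1}S_H(a_2)\big)\cdot_K R^{-1}(a_3)=\epsilon(a)1_K$ for all $a\in H$. A morphism from $R:K\to H$ to $R':K'\to H'$ is a pair $(f:H\to H',g:K\to K')$ of algebra and coalgebra morphisms with $fR=R'g$ and $g(h\rightharpoonup k)=f(h)\rightharpoonup' g(k)$. $\mathcal{YD}\mathrm{rRB}(\mathrm{Vec}_\Bbbk)$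 denotes the category of Yetter--Drinfeld relative Rota--Baxter operators. *)

theory Defs
  imports Complex_Main
begin

text \<open>Elements of a tensor
product V (x) W are represented by finite lists of pairs (sums of elementary tensors);
two such lists denote the same tensor iff every bilinear form V x W -> 'f takes the same
value on them (this is exactly equality in V (x) W, as bilinear forms are the dual of
V (x) W and the dual separates points).  Likewise for triple tensors.\<close>

definition lin :: "('f \<Rightarrow> 'a \<Rightarrow> 'a) \<Rightarrow> ('f \<Rightarrow> 'b \<Rightarrow> 'b) \<Rightarrow> ('a::plus \<Rightarrow> 'b::plus) \<Rightarrow> bool" where
  "lin s1 s2 f \<longleftrightarrow> (\<forall>x y. f (x + y) = f x + f y) \<and> (\<forall>c x. f (s1 c x) = s2 c (f x))"

definition bilin :: "('f \<Rightarrow> 'a \<Rightarrow> 'a) \<Rightarrow> ('f \<Rightarrow> 'b \<Rightarrow> 'b) \<Rightarrow> ('f \<Rightarrow> 'c \<Rightarrow> 'c)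
    \<Rightarrow> ('a::plus \<Rightarrow> 'b::plus \<Rightarrow> 'c::plus) \<Rightarrow> bool" where
  "bilin s1 s2 s3 f \<longleftrightarrow> (\<forall>x. lin s2 s3 (f x)) \<and> (\<forall>y. lin s1 s3 (\<lambda>x. f x y))"

definition trilin :: "('f \<Rightarrow> 'a \<Rightarrow> 'a) \<Rightarrow> ('f \<Rightarrow> 'b \<Rightarrow> 'b) \<Rightarrow> ('f \<Rightarrow> 'c \<Rightarrow> 'c) \<Rightarrow> ('f \<Rightarrow> 'd \<Rightarrow> 'd)
    \<Rightarrow> ('a::plus \<Rightarrow> 'b::plus \<Rightarrow> 'c::plus \<Rightarrow> 'd::plus) \<Rightarrow> bool" where
  "trilin s1 s2 s3 s4 f \<longleftrightarrow> (\<forall>x. bilin s2 s3 s4 (f x)) \<and> (\<forall>y z. lin s1 s4 (\<lambda>x. f x y z))"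

definition teq2 :: "('f::field \<Rightarrow> 'a \<Rightarrow> 'a) \<Rightarrow> ('f \<Rightarrow> 'b \<Rightarrow> 'b)
    \<Rightarrow> ('a::plus \<times> 'b::plus) list \<Rightarrow> ('a \<times> 'b) list \<Rightarrow> bool" where
  "teq2 s1 s2 t t' \<longleftrightarrow> (\<forall>\<phi>. bilin s1 s2 (*) \<phi> \<longrightarrow>
     sum_list (map (\<lambda>(a, b). \<phi> a b) t) = sum_list (map (\<lambda>(a, b). \<phi> a b) t'))"

definition teq3 :: "('f::field \<Rightarrow> 'a \<Rightarrow> 'a) \<Rightarrow> ('f \<Rightarrow> 'b \<Rightarrow> 'b) \<Rightarrow> ('f \<Rightarrow> 'c \<Rightarrow> 'c)
    \<Rightarrow> ('a::plus \<times> 'b::plus \<times> 'c::plus) list \<Rightarrow> ('a \<times> 'b \<times> 'c) list \<Rightarrow> bool" where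
  "teq3 s1 s2 s3 t t' \<longleftrightarrow> (\<forall>\<phi>. trilin s1 s2 s3 (*) \<phi> \<longrightarrow>
     sum_list (map (\<lambda>(a, b, c). \<phi> a b c) t) = sum_list (map (\<lambda>(a, b, c). \<phi> a b c) t'))"

definition ssum :: "('a \<times> 'b) list \<Rightarrow> ('a \<Rightarrow> 'b \<Rightarrow> 'v::monoid_add) \<Rightarrow> 'v" where
  "ssum t F = sum_list (map (\<lambda>(a, b). F a b) t)"

definition lsum :: "('a \<times> 'b) list \<Rightarrow> ('a \<Rightarrow> 'b \<Rightarrow> 'w list) \<Rightarrow> 'w list" where
  "lsum t F = concat (map (\<lambda>(a, b). F a b) t)"

text \<open>Sweedler notation: sw3 cop x F = F x_1 x_2 x_3 (summed), sw4 likewise.\<close>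
definition sw3 :: "('h \<Rightarrow> ('h \<times> 'h) list) \<Rightarrow> 'h \<Rightarrow> ('h \<Rightarrow> 'h \<Rightarrow> 'h \<Rightarrow> 'v::monoid_add) \<Rightarrow> 'v" where
  "sw3 cop x F = ssum (cop x) (\<lambda>a b. ssum (cop a) (\<lambda>c d. F c d b))"

definition lw3 :: "('h \<Rightarrow> ('h \<times> 'h) list) \<Rightarrow> 'h \<Rightarrow> ('h \<Rightarrow> 'h \<Rightarrow> 'h \<Rightarrow> 'w list) \<Rightarrow> 'w list" where
  "lw3 cop x F = lsum (cop x) (\<lambda>a b. lsum (cop a) (\<lambda>c d. F c d b))"

definition lw4 :: "('h \<Rightarrow> ('h \<times> 'h) list) \<Rightarrow> 'h \<Rightarrow> ('h \<Rightarrow> 'h \<Rightarrow> 'h \<Rightarrow> 'h \<Rightarrow> 'w list) \<Rightarrow> 'w list" where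
  "lw4 cop x F = lw3 cop x (\<lambda>a b c. lsum (cop c) (\<lambda>d e. F a b d e))"

record ('f, 'h) halg =
  h_sc  :: "'f \<Rightarrow> 'h \<Rightarrow> 'h"
  h_mul :: "'h \<Rightarrow> 'h \<Rightarrow> 'h"
  h_one :: "'h"
  h_cop :: "'h \<Rightarrow> ('h \<times> 'h) list"
  h_cou :: "'h \<Rightarrow> 'f"
  h_ant :: "'h \<Rightarrow> 'h"

definition is_algebra :: "('f::field, 'h::ab_group_add) halg \<Rightarrow> bool" where
  "is_algebra A \<longleftrightarrow> vector_space (h_sc A) \<and> bilin (h_sc A) (h_sc A) (h_sc A) (h_mul A)
    \<and> (\<forall>x y z. h_mul A (h_mul A x y) z = h_mul A x (h_mul A y z))
    \<and> (\<forall>x. h_mul A (h_one A) x = x \<and> h_mul A x (h_one A) = x)"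

definition is_coalgebra :: "('f::field, 'h::ab_group_add) halg \<Rightarrow> bool" where
  "is_coalgebra A \<longleftrightarrow> vector_space (h_sc A)
    \<and> (\<forall>x y. teq2 (h_sc A) (h_sc A) (h_cop A (x + y)) (h_cop A x @ h_cop A y))
    \<and> (\<forall>c x. teq2 (h_sc A) (h_sc A) (h_cop A (h_sc A c x))
                  (map (\<lambda>(a, b). (h_sc A c a, b)) (h_cop A x)))
    \<and> lin (h_sc A) (*) (h_cou A)
    \<and> (\<forall>x. teq3 (h_sc A) (h_sc A) (h_sc A)
            (lsum (h_cop A x) (\<lambda>a b. map (\<lambda>(c, d). (c, d, b)) (h_cop A a)))
            (lsum (h_cop A x) (\<lambda>a b. map (\<lambda>(c, d). (a, c, d)) (h_cop A b))))
    \<and> (\<forall>x. ssum (h_cop A x) (\<lambda>a b. h_sc A (h_cou A a) b) = x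
         \<and> ssum (h_cop A x) (\<lambda>a b. h_sc A (h_cou A b) a) = x)"

definition is_antipode :: "('f::field, 'h::ab_group_add) halg \<Rightarrow> bool" where
  "is_antipode A \<longleftrightarrow> lin (h_sc A) (h_sc A) (h_ant A)
    \<and> (\<forall>x. ssum (h_cop A x) (\<lambda>a b. h_mul A a (h_ant A b)) = h_sc A (h_cou A x) (h_one A)
         \<and> ssum (h_cop A x) (\<lambda>a b. h_mul A (h_ant A a) b) = h_sc A (h_cou A x) (h_one A))"

definition unit_counit_compat :: "('f::field, 'h::ab_group_add) halg \<Rightarrow> bool" where
  "unit_counit_compat A \<longleftrightarrow> (\<forall>a b. h_cou A (h_mul A a b) = h_cou A a * h_cou A b)
    \<and> h_cou A (h_one A) = 1
    \<and> teq2 (h_sc A) (h_sc A) (h_cop A (h_one A)) [(h_one A, h_one A)]"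

definition is_hopf_algebra :: "('f::field, 'h::ab_group_add) halg \<Rightarrow> bool" where
  "is_hopf_algebra A \<longleftrightarrow> is_algebra A \<and> is_coalgebra A \<and> unit_counit_compat A
    \<and> (\<forall>x y. teq2 (h_sc A) (h_sc A) (h_cop A (h_mul A x y))
          (lsum (h_cop A x) (\<lambda>x1 x2. lsum (h_cop A y) (\<lambda>y1 y2. [(h_mul A x1 y1, h_mul A x2 y2)]))))
    \<and> is_antipode A"

definition alg_coalg_morph :: "('f::field, 'h::ab_group_add) halg \<Rightarrow> ('f, 'g::ab_group_add) halg
    \<Rightarrow> ('h \<Rightarrow> 'g) \<Rightarrow> bool" where
  "alg_coalg_morph A A' f \<longleftrightarrow> lin (h_sc A) (h_sc A') f
    \<and> (\<forall>x y. f (h_mul A x y) = h_mul A' (f x) (f y)) \<and> f (h_one A) = h_one A'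
    \<and> (\<forall>x. teq2 (h_sc A') (h_sc A') (h_cop A' (f x)) (map (\<lambda>(a, b). (f a, f b)) (h_cop A x)))
    \<and> (\<forall>x. h_cou A' (f x) = h_cou A x)"

text \<open>beta is a convolution inverse of alpha(x)(y) = act x y in Hom(H, End(H)).\<close>
definition conv_inv :: "('f::field, 'h::ab_group_add) halg \<Rightarrow> ('h \<Rightarrow> 'h \<Rightarrow> 'h)
    \<Rightarrow> ('h \<Rightarrow> 'h \<Rightarrow> 'h) \<Rightarrow> bool" where
  "conv_inv A act \<beta> \<longleftrightarrow> bilin (h_sc A) (h_sc A) (h_sc A) \<beta>
    \<and> (\<forall>x y. ssum (h_cop A x) (\<lambda>a b. act a (\<beta> b y)) = h_sc A (h_cou A x) y
           \<and> ssum (h_cop A x) (\<lambda>a b. \<beta> a (act b y)) = h_sc A (h_cou A x) y)"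

text \<open>The (unique) convolution inverse beta_act.\<close>
definition betaOf :: "('f::field, 'h::ab_group_add) halg \<Rightarrow> ('h \<Rightarrow> 'h \<Rightarrow> 'h) \<Rightarrow> 'h \<Rightarrow> 'h \<Rightarrow> 'h" where
  "betaOf A act = (SOME \<beta>. conv_inv A act \<beta>)"

definition bul :: "('f::field, 'h::ab_group_add) halg \<Rightarrow> ('h \<Rightarrow> 'h \<Rightarrow> 'h) \<Rightarrow> 'h \<Rightarrow> 'h \<Rightarrow> 'h" where
  "bul A act x y = ssum (h_cop A x) (\<lambda>a b. h_mul A a (act b y))"

definition Sr :: "('f::field, 'h::ab_group_add) halg \<Rightarrow> ('h \<Rightarrow> 'h \<Rightarrow> 'h) \<Rightarrow> 'h \<Rightarrow> 'h" where
  "Sr A act x = ssum (h_cop A x) (\<lambda>a b. betaOf A act a (h_ant A b))"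

definition lhp :: "('f::field, 'h::ab_group_add) halg \<Rightarrow> ('h \<Rightarrow> 'h \<Rightarrow> 'h) \<Rightarrow> 'h \<Rightarrow> 'h \<Rightarrow> 'h" where
  "lhp A act x y = ssum (h_cop A x) (\<lambda>x1 x2. ssum (h_cop A y) (\<lambda>y1 y2.
      bul A act (bul A act (Sr A act (act x1 y1)) x2) y2))"

definition is_ydph :: "('f::field, 'h::ab_group_add) halg \<Rightarrow> ('h \<Rightarrow> 'h \<Rightarrow> 'h) \<Rightarrow> bool" where
  "is_ydph A act \<longleftrightarrow> is_algebra A \<and> is_coalgebra A \<and> is_antipode A
    \<comment> \<open>act : H (x) H -> H is a coalgebra morphism\<close>
    \<and> bilin (h_sc A) (h_sc A) (h_sc A) act
    \<and> (\<forall>x y. teq2 (h_sc A) (h_sc A) (h_cop A (act x y))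
          (lsum (h_cop A x) (\<lambda>x1 x2. lsum (h_cop A y) (\<lambda>y1 y2. [(act x1 y1, act x2 y2)]))))
    \<and> (\<forall>x y. h_cou A (act x y) = h_cou A x * h_cou A y)
    \<comment> \<open>(P1)\<close>
    \<and> (\<forall>x y z. act x (h_mul A y z) = ssum (h_cop A x) (\<lambda>a b. h_mul A (act a y) (act b z)))
    \<comment> \<open>(P2)\<close>
    \<and> (\<forall>x y z. act x (act y z) = act (bul A act x y) z)
    \<comment> \<open>(P3)\<close>
    \<and> (\<exists>\<beta>. conv_inv A act \<beta>)
    \<comment> \<open>(P4)\<close>
    \<and> unit_counit_compat A
    \<comment> \<open>(P5)\<close>
    \<and> (\<forall>x y. teq2 (h_sc A) (h_sc A) (h_cop A (h_mul A x y))
          (lw4 (h_cop A) x (\<lambda>x1 x2 x3 x4. lsum (h_cop A y) (\<lambda>y1 y2.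
              [(h_mul A x1 (act x2 (betaOf A act x4 y1)), h_mul A x3 y2)]))))
    \<comment> \<open>(P6)\<close>
    \<and> (\<forall>x. teq2 (h_sc A) (h_sc A) (h_cop A (Sr A act x))
          (lsum (h_cop A x) (\<lambda>a b. [(Sr A act b, Sr A act a)])))
    \<and> (\<forall>x y. teq2 (h_sc A) (h_sc A)
          (lsum (h_cop A x) (\<lambda>x1 x2. lsum (h_cop A y) (\<lambda>y1 y2. [(act x1 y1, lhp A act x2 y2)])))
          (lsum (h_cop A x) (\<lambda>x1 x2. lsum (h_cop A y) (\<lambda>y1 y2. [(act x2 y2, lhp A act x1 y1)]))))"

definition ydph_morph :: "('f::field, 'h::ab_group_add) halg \<Rightarrow> ('h \<Rightarrow> 'h \<Rightarrow> 'h)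
    \<Rightarrow> ('f, 'g::ab_group_add) halg \<Rightarrow> ('g \<Rightarrow> 'g \<Rightarrow> 'g) \<Rightarrow> ('h \<Rightarrow> 'g) \<Rightarrow> bool" where
  "ydph_morph A act A' act' g \<longleftrightarrow> alg_coalg_morph A A' g
    \<and> (\<forall>x y. g (act x y) = act' (g x) (g y))"

definition sub_hopf :: "('f::field, 'h::ab_group_add) halg \<Rightarrow> ('h \<Rightarrow> 'h \<Rightarrow> 'h) \<Rightarrow> ('f, 'h) halg" where
  "sub_hopf A act = A\<lparr>h_mul := bul A act, h_ant := Sr A act\<rparr>"

definition yd_coact :: "('f::field, 'h::ab_group_add) halg \<Rightarrow> ('h \<Rightarrow> 'h \<Rightarrow> 'h) \<Rightarrow> 'h \<Rightarrow> ('h \<times> 'h) list" where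
  "yd_coact A act a = lw3 (h_cop A) a (\<lambda>a1 a2 a3. [(bul A act a1 (Sr A act a3), a2)])"

definition is_yd_module :: "('f::field, 'h::ab_group_add) halg \<Rightarrow> ('f \<Rightarrow> 'v \<Rightarrow> 'v)
    \<Rightarrow> ('h \<Rightarrow> 'v::ab_group_add \<Rightarrow> 'v) \<Rightarrow> ('v \<Rightarrow> ('h \<times> 'v) list) \<Rightarrow> bool" where
  "is_yd_module B sV act rho \<longleftrightarrow> vector_space sV
    \<and> bilin (h_sc B) sV sV act
    \<and> (\<forall>v. act (h_one B) v = v) \<and> (\<forall>a b v. act (h_mul B a b) v = act a (act b v))
    \<and> (\<forall>v w. teq2 (h_sc B) sV (rho (v + w)) (rho v @ rho w))
    \<and> (\<forall>c v. teq2 (h_sc B) sV (rho (sV c v)) (map (\<lambda>(h, w). (h_sc B c h, w)) (rho v)))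
    \<and> (\<forall>v. teq3 (h_sc B) (h_sc B) sV
            (lsum (rho v) (\<lambda>h w. map (\<lambda>(h1, h2). (h1, h2, w)) (h_cop B h)))
            (lsum (rho v) (\<lambda>h w. map (\<lambda>(h', w'). (h, h', w')) (rho w))))
    \<and> (\<forall>v. ssum (rho v) (\<lambda>h w. sV (h_cou B h) w) = v)
    \<and> (\<forall>a v. teq2 (h_sc B) sV (rho (act a v))
            (lw3 (h_cop B) a (\<lambda>a1 a2 a3. lsum (rho v) (\<lambda>h w.
                [(h_mul B (h_mul B a1 h) (h_ant B a3), act a2 w)]))))"

text \<open>Bimonoid in the braided category of YD modules over B, braiding
sigma(v (x) w) = v_{-1} act w (x) v_0.  The field h_ant of K is irrelevant.\<close>
definition is_yd_bimonoid :: "('f::field, 'h::ab_group_add) halg \<Rightarrow> ('f, 'k::ab_group_add) halg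
    \<Rightarrow> ('h \<Rightarrow> 'k \<Rightarrow> 'k) \<Rightarrow> ('k \<Rightarrow> ('h \<times> 'k) list) \<Rightarrow> bool" where
  "is_yd_bimonoid B K act rho \<longleftrightarrow> is_yd_module B (h_sc K) act rho
    \<and> is_algebra K \<and> is_coalgebra K
    \<comment> \<open>multiplication and unit are module maps\<close>
    \<and> (\<forall>a x y. act a (h_mul K x y) = ssum (h_cop B a) (\<lambda>a1 a2. h_mul K (act a1 x) (act a2 y)))
    \<and> (\<forall>a. act a (h_one K) = h_sc K (h_cou B a) (h_one K))
    \<comment> \<open>multiplication and unit are comodule maps\<close>
    \<and> (\<forall>x y. teq2 (h_sc B) (h_sc K) (rho (h_mul K x y))
          (lsum (rho x) (\<lambda>h v. lsum (rho y) (\<lambda>h' w. [(h_mul B h h', h_mul K v w)]))))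
    \<and> teq2 (h_sc B) (h_sc K) (rho (h_one K)) [(h_one B, h_one K)]
    \<comment> \<open>comultiplication and counit are module maps\<close>
    \<and> (\<forall>a x. teq2 (h_sc K) (h_sc K) (h_cop K (act a x))
          (lsum (h_cop B a) (\<lambda>a1 a2. lsum (h_cop K x) (\<lambda>x1 x2. [(act a1 x1, act a2 x2)]))))
    \<and> (\<forall>a x. h_cou K (act a x) = h_cou B a * h_cou K x)
    \<comment> \<open>comultiplication and counit are comodule maps\<close>
    \<and> (\<forall>x. teq3 (h_sc B) (h_sc K) (h_sc K)
          (lsum (rho x) (\<lambda>h v. map (\<lambda>(v1, v2). (h, v1, v2)) (h_cop K v)))
          (lsum (h_cop K x) (\<lambda>x1 x2. lsum (rho x1) (\<lambda>h v. lsum (rho x2) (\<lambda>h' w.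
              [(h_mul B h h', v, w)])))))
    \<and> (\<forall>x. ssum (rho x) (\<lambda>h v. h_sc B (h_cou K v) h) = h_sc B (h_cou K x) (h_one B))
    \<comment> \<open>bimonoid axioms\<close>
    \<and> unit_counit_compat K
    \<and> (\<forall>x y. teq2 (h_sc K) (h_sc K) (h_cop K (h_mul K x y))
          (lsum (h_cop K x) (\<lambda>x1 x2. lsum (h_cop K y) (\<lambda>y1 y2. lsum (rho x2) (\<lambda>h v.
              [(h_mul K x1 (act h y1), h_mul K v y2)])))))"

definition is_yd_rrb :: "('f::field, 'h::ab_group_add) halg \<Rightarrow> ('f, 'k::ab_group_add) halg
    \<Rightarrow> ('h \<Rightarrow> 'k \<Rightarrow> 'k) \<Rightarrow> ('k \<Rightarrow> ('h \<times> 'k) list) \<Rightarrow> ('k \<Rightarrow> 'h) \<Rightarrow> bool" where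
  "is_yd_rrb B K act rho R \<longleftrightarrow> is_hopf_algebra B \<and> is_yd_bimonoid B K act rho
    \<comment> \<open>R is a coalgebra morphism\<close>
    \<and> lin (h_sc K) (h_sc B) R
    \<and> (\<forall>a. teq2 (h_sc B) (h_sc B) (h_cop B (R a)) (map (\<lambda>(a1, a2). (R a1, R a2)) (h_cop K a)))
    \<and> (\<forall>a. h_cou B (R a) = h_cou K a)
    \<comment> \<open>(RB1)\<close>
    \<and> (\<forall>a b. h_mul B (R a) (R b) = R (ssum (h_cop K a) (\<lambda>a1 a2. h_mul K a1 (act (R a2) b))))
    \<comment> \<open>(RB2)\<close>
    \<and> (\<forall>a b. teq2 (h_sc B) (h_sc B)
          (lw3 (h_cop K) a (\<lambda>a1 a2 a3. lw3 (h_cop K) b (\<lambda>b1 b2 b3.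
             [(h_mul B (h_mul B (h_ant B (R (act (R a1) b1))) (R a2)) (R b2), R (act (R a3) b3))])))
          (lw3 (h_cop K) a (\<lambda>a1 a2 a3. lw3 (h_cop K) b (\<lambda>b1 b2 b3.
             [(h_mul B (h_mul B (h_ant B (R (act (R a2) b2))) (R a3)) (R b3), R (act (R a1) b1))]))))
    \<comment> \<open>bijectivity and (RB3)\<close>
    \<and> bij R
    \<and> (\<forall>a. sw3 (h_cop B) a (\<lambda>a1 a2 a3. h_mul K (act a1 (inv R (h_ant B a2))) (inv R a3))
           = h_sc K (h_cou B a) (h_one K))"

definition yd_rrb_morph :: "('f::field, 'h::ab_group_add) halg \<Rightarrow> ('f, 'k::ab_group_add) halg
    \<Rightarrow> ('h \<Rightarrow> 'k \<Rightarrow> 'k) \<Rightarrow> ('k \<Rightarrow> 'h)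
    \<Rightarrow> ('f, 'h2::ab_group_add) halg \<Rightarrow> ('f, 'k2::ab_group_add) halg
    \<Rightarrow> ('h2 \<Rightarrow> 'k2 \<Rightarrow> 'k2) \<Rightarrow> ('k2 \<Rightarrow> 'h2) \<Rightarrow> ('h \<Rightarrow> 'h2) \<Rightarrow> ('k \<Rightarrow> 'k2) \<Rightarrow> bool" where
  "yd_rrb_morph B K act R B' K' act' R' f g \<longleftrightarrow>
    alg_coalg_morph B B' f \<and> alg_coalg_morph K K' g
    \<and> (\<forall>k. f (R k) = R' (g k))
    \<and> (\<forall>h k. g (act h k) = act' (f h) (g k))"

end

theory Submission
  imports Defs
begin

text \<open>The identity is a relative Rota--Baxter operator essentially by construction: (RB1) is
the definition of \<open>x \<bullet> y = x\<^sub>1 (x\<^sub>2 \<rightharpoonup> y)\<close>, (RB2) is the second identity of (P6)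
after reindexing, and (RB3) holds because \<open>x\<^sub>1 \<rightharpoonup> S\<^sub>\<rightharpoonup>(x\<^sub>2) = S(x)\<close>.  The work lies in
showing that \<open>H\<^sub>\<rightharpoonup>\<close> is a Hopf algebra and \<open>H\<close> a bimonoid in Yetter--Drinfeld modules over
it.  Everything reduces to Sweedler calculus, driven by three consequences of the axioms:
\<open>\<beta>\<^sub>\<rightharpoonup>(x) = \<alpha>\<^sub>\<rightharpoonup>(S\<^sub>\<rightharpoonup> x)\<close>, the factorisation \<open>x \<bullet> y = (x\<^sub>1 \<rightharpoonup> y\<^sub>1) \<bullet> (x\<^sub>2 \<leftharpoonup> y\<^sub>2)\<close>, and
\<open>x \<cdot> y = x\<^sub>1 \<bullet> (S\<^sub>\<rightharpoonup>(x\<^sub>2) \<rightharpoonup> y)\<close>.  The Yetter--Drinfeld compatibility of the coaction is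
where the braided commutativity in (P6) enters.  A morphism of post-Hopf algebras preserves
\<open>\<bullet>\<close>, hence it is a morphism of the subadjacent Hopf algebras, which gives functoriality.

Tensors are lists of pairs compared by all bilinear forms, so every equation between tensors
is turned into an equation of sums by evaluating a multilinear map on both sides; this is
legitimate because linear functionals separate the points of a vector space.\<close>

section \<open>Tensors tested against multilinear maps\<close>

lemma linear_functionals_separate:
  assumes "vector_space (s::'f::field \<Rightarrow> 'w::ab_group_add \<Rightarrow> 'w)"
    and separates: "\<And>\<psi>. lin s (*) \<psi> \<Longrightarrow> \<psi> u = (\<psi> v :: 'f)"
  shows "u = v"
proof (rule ccontr)
  interpret vector_space s by fact
  assume "u \<noteq> v"
  define w where "w = u - v"
  have indep: "independent {w}" using \<open>u \<noteq> v\<close> by (simp add: w_def)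
  define B where "B = extend_basis {w}"
  have iB: "independent B" using independent_extend_basis[OF indep] by (simp add: B_def)
  have sB: "\<And>x. x \<in> span B" using span_extend_basis[OF indep] by (simp add: B_def)
  have wB: "w \<in> B" using extend_basis_superset[OF indep] by (simp add: B_def)
  define \<psi> where "\<psi> x = representation B x w" for x
  have "lin s (*) \<psi>"
    unfolding lin_def \<psi>_def using representation_add[OF iB sB sB] representation_scale[OF iB sB]
    by simp
  then have "\<psi> u = \<psi> v" by (rule separates)
  moreover have "\<psi> u = \<psi> w + \<psi> v"
    unfolding \<psi>_def w_def using representation_add[OF iB sB sB, of "u - v" v] by simp
  moreover have "\<psi> w = 1" unfolding \<psi>_def using representation_basis[OF iB wB] by simp
  ultimately show False by simp
qed

lemma vector_space_mult: "vector_space ((*) :: 'f::field \<Rightarrow> 'f \<Rightarrow> 'f)"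
  by unfold_locales (auto simp: algebra_simps)

lemma lin_add: "lin s1 s2 f \<Longrightarrow> f (x + y) = f x + f y" by (simp add: lin_def)
lemma lin_scale: "lin s1 s2 f \<Longrightarrow> f (s1 c x) = s2 c (f x)" by (simp add: lin_def)
lemma lin_zero: "lin s1 s2 (f::'a::ab_group_add \<Rightarrow> 'b::ab_group_add) \<Longrightarrow> f 0 = 0"
  using lin_add[of s1 s2 f 0 0] by simp
lemma lin_comp: "lin s2 s3 g \<Longrightarrow> lin s1 s2 f \<Longrightarrow> lin s1 s3 (\<lambda>x. g (f x))"
  by (simp add: lin_def)
lemma lin_id[simp]: "lin s s (\<lambda>x. x)" by (simp add: lin_def)

lemma lin_scL[simp]:
  assumes "vector_space sW" and "lin s (*) f"
  shows "lin s sW (\<lambda>x. sW (f x) c)"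
proof -
  interpret vector_space sW by fact
  show ?thesis using \<open>lin s (*) f\<close> unfolding lin_def by (simp add: scale_left_distrib)
qed

lemma bilinD1: "bilin s1 s2 s3 f \<Longrightarrow> lin s2 s3 (f x)" by (simp add: bilin_def)
lemma bilinD2: "bilin s1 s2 s3 f \<Longrightarrow> lin s1 s3 (\<lambda>x. f x y)" by (simp add: bilin_def)
lemma bilin_scL: "bilin s1 s2 s3 g \<Longrightarrow> g (s1 c x) y = s3 c (g x y)" by (simp add: bilin_def lin_def)
lemma bilin_scR: "bilin s1 s2 s3 g \<Longrightarrow> g x (s2 c y) = s3 c (g x y)" by (simp add: bilin_def lin_def)
lemma lin_bilin_L: "bilin s1 s2 s3 g \<Longrightarrow> lin s s1 f \<Longrightarrow> lin s s3 (\<lambda>x. g (f x) c)"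
  by (rule lin_comp[OF bilinD2])
lemma lin_bilin_R: "bilin s1 s2 s3 g \<Longrightarrow> lin s s2 f \<Longrightarrow> lin s s3 (\<lambda>x. g c (f x))"
  by (rule lin_comp[OF bilinD1])

lemma trilin_linD:
  "trilin s1 s2 s3 s4 \<phi> \<Longrightarrow> lin s1 s4 (\<lambda>x. \<phi> x b c)"
  "trilin s1 s2 s3 s4 \<phi> \<Longrightarrow> lin s2 s4 (\<lambda>x. \<phi> a x c)"
  "trilin s1 s2 s3 s4 \<phi> \<Longrightarrow> lin s3 s4 (\<lambda>x. \<phi> a b x)"
  by (auto simp: trilin_def bilin_def)

lemma ssum_cong: "(\<And>a b. F a b = G a b) \<Longrightarrow> ssum t F = ssum t G"
  by (simp add: ssum_def)
lemma ssum_Nil[simp]: "ssum [] F = 0" by (simp add: ssum_def)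
lemma ssum_Cons[simp]: "ssum ((a,b) # t) F = F a b + ssum t F" by (simp add: ssum_def)
lemma ssum_append[simp]: "ssum (t @ t') F = ssum t F + ssum t' F" by (simp add: ssum_def)
lemma ssum_map[simp]: "ssum (map (\<lambda>(a, b). (f a b, g a b)) t) F = ssum t (\<lambda>a b. F (f a b) (g a b))"
  by (induction t) (auto simp: ssum_def)
lemma ssum_map1: "ssum (map (\<lambda>(a, b). (f a, b)) t) G = ssum t (\<lambda>a b. G (f a) b)"
  by (induction t) (auto simp: ssum_def)
lemma ssum_lsum[simp]: "ssum (lsum t G) F = ssum t (\<lambda>a b. ssum (G a b) F)"
  by (induction t) (auto simp: ssum_def lsum_def)
lemma ssum_add: "ssum t (\<lambda>a b. F a b + G a b) = ssum t F + (ssum t G :: 'v::comm_monoid_add)"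
  by (induction t) (auto simp: ssum_def algebra_simps)
lemma ssum_zero[simp]: "ssum t (\<lambda>a b. 0) = (0::'v::comm_monoid_add)"
  by (induction t) (auto simp: ssum_def)
lemma ssum_swap:
  "ssum t (\<lambda>a b. ssum t' (\<lambda>c d. F a b c d)) = ssum t' (\<lambda>c d. ssum t (\<lambda>a b. F a b c d) :: 'v::comm_monoid_add)"
  by (induction t) (auto simp: ssum_add)

lemma ssum_scale: "vector_space s \<Longrightarrow> s c (ssum t G) = ssum t (\<lambda>a b. s c (G a b))"
proof -
  assume "vector_space s" then interpret vector_space s .
  show ?thesis by (induction t) (auto simp: ssum_def scale_right_distrib)
qed

lemma lin_ssumI[simp]:
  assumes "vector_space s2" "\<And>a b. lin s1 s2 (\<lambda>x. F x a b)"
  shows "lin s1 s2 (\<lambda>x. ssum L (F x))"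
proof -
  interpret vector_space s2 by fact
  show ?thesis using assms(2) unfolding lin_def
    by (induction L) (auto simp: algebra_simps scale_right_distrib)
qed

lemma lin_ssum_distrib:
  assumes "lin s1 s2 (f::'a::ab_group_add \<Rightarrow> 'b::ab_group_add)"
  shows "f (ssum t F) = ssum t (\<lambda>a b. f (F a b))"
  using assms by (induction t) (auto simp: lin_zero lin_add)

definition ssum3 :: "('a \<times> 'b \<times> 'c) list \<Rightarrow> ('a \<Rightarrow> 'b \<Rightarrow> 'c \<Rightarrow> 'v::monoid_add) \<Rightarrow> 'v" where
  "ssum3 t F = sum_list (map (\<lambda>(a, b, c). F a b c) t)"

lemma ssum3_lsum[simp]: "ssum3 (lsum t G) F = ssum t (\<lambda>a b. ssum3 (G a b) F)"
  by (induction t) (auto simp: ssum_def ssum3_def lsum_def)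
lemma ssum3_map1[simp]: "ssum3 (map (\<lambda>(c, d). (c, d, b)) t) F = ssum t (\<lambda>c d. F c d b)"
  by (induction t) (auto simp: ssum_def ssum3_def)
lemma ssum3_map2[simp]: "ssum3 (map (\<lambda>(c, d). (a, c, d)) t) F = ssum t (\<lambda>c d. F a c d)"
  by (induction t) (auto simp: ssum_def ssum3_def)
lemma ssum3_map_Pair[simp]: "ssum3 (map (Pair a) t) F = ssum t (F a)"
  by (induction t) (auto simp: ssum_def ssum3_def)
lemma ssum3_single[simp]: "ssum3 [(a,b,c)] F = F a b c" by (simp add: ssum3_def)

lemma lin_ssum3_distrib:
  assumes "lin s1 s2 (f::'a::ab_group_add \<Rightarrow> 'b::ab_group_add)"
  shows "f (ssum3 t F) = ssum3 t (\<lambda>a b c. f (F a b c))"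
  using assms by (induction t) (auto simp: lin_zero lin_add ssum3_def)

lemma teq2_ssum_eq:
  assumes W: "vector_space sW" and "teq2 s1 s2 t t'" and F: "bilin s1 s2 sW F"
  shows "ssum t F = ssum t' F"
proof (rule linear_functionals_separate[OF W])
  fix \<psi> assume \<psi>: "lin sW (*) \<psi>"
  have "bilin s1 s2 (*) (\<lambda>a b. \<psi> (F a b))"
    using F \<psi> unfolding bilin_def by (auto intro: lin_comp)
  with \<open>teq2 s1 s2 t t'\<close> have "ssum t (\<lambda>a b. \<psi> (F a b)) = ssum t' (\<lambda>a b. \<psi> (F a b))"
    unfolding teq2_def ssum_def by blast
  then show "\<psi> (ssum t F) = \<psi> (ssum t' F)" by (simp add: lin_ssum_distrib[OF \<psi>])
qed

lemma teq3_ssum3_eq: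
  assumes W: "vector_space sW" and "teq3 s1 s2 s3 t t'" and F: "trilin s1 s2 s3 sW F"
  shows "ssum3 t F = ssum3 t' F"
proof (rule linear_functionals_separate[OF W])
  fix \<psi> assume \<psi>: "lin sW (*) \<psi>"
  have "trilin s1 s2 s3 (*) (\<lambda>a b c. \<psi> (F a b c))"
    using F \<psi> unfolding trilin_def bilin_def by (auto intro: lin_comp)
  with \<open>teq3 s1 s2 s3 t t'\<close> have "ssum3 t (\<lambda>a b c. \<psi> (F a b c)) = ssum3 t' (\<lambda>a b c. \<psi> (F a b c))"
    unfolding teq3_def ssum3_def by blast
  then show "\<psi> (ssum3 t F) = \<psi> (ssum3 t' F)" by (simp add: lin_ssum3_distrib[OF \<psi>])
qed

lemma teq2_refl: "teq2 s1 s2 t t" by (simp add: teq2_def)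

lemma teq2I: "(\<And>\<phi>. bilin s1 s2 (*) \<phi> \<Longrightarrow> ssum t \<phi> = ssum t' \<phi>) \<Longrightarrow> teq2 s1 s2 t t'"
  unfolding teq2_def ssum_def by blast
lemma teq3I: "(\<And>\<phi>. trilin s1 s2 s3 (*) \<phi> \<Longrightarrow> ssum3 t \<phi> = ssum3 t' \<phi>) \<Longrightarrow> teq3 s1 s2 s3 t t'"
  unfolding teq3_def ssum3_def by blast

locale yd_post_hopf =
  fixes A :: "('f::field, 'h::ab_group_add) halg" and act :: "'h \<Rightarrow> 'h \<Rightarrow> 'h"
  assumes is_ydph: "is_ydph A act"
begin

abbreviation "sc \<equiv> h_sc A"
abbreviation "mul \<equiv> h_mul A"
abbreviation "one \<equiv> h_one A"
abbreviation "cop \<equiv> h_cop A"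
abbreviation "cou \<equiv> h_cou A"
abbreviation "ant \<equiv> h_ant A"
abbreviation "\<beta> \<equiv> betaOf A act"
abbreviation "bu \<equiv> bul A act"
abbreviation "Sa \<equiv> Sr A act"
abbreviation "lh \<equiv> lhp A act"
abbreviation "rho \<equiv> yd_coact A act"

lemma algebra: "is_algebra A" and coalgebra: "is_coalgebra A" and has_antipode: "is_antipode A"
  using is_ydph by (auto simp: is_ydph_def)

lemma sc_vector_space: "vector_space sc" using algebra by (simp add: is_algebra_def)
lemma mul_bilin: "bilin sc sc sc mul" using algebra by (simp add: is_algebra_def)
lemma mul_assoc: "mul (mul x y) z = mul x (mul y z)" using algebra by (simp add: is_algebra_def)
lemma one_mul[simp]: "mul one x = x" and mul_one[simp]: "mul x one = x"
  using algebra by (simp_all add: is_algebra_def)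
lemma cop_add: "teq2 sc sc (cop (x + y)) (cop x @ cop y)"
  using coalgebra by (simp add: is_coalgebra_def)
lemma cop_scale: "teq2 sc sc (cop (sc c x)) (map (\<lambda>(a, b). (sc c a, b)) (cop x))"
  using coalgebra by (simp add: is_coalgebra_def)
lemma cou_lin: "lin sc (*) cou" using coalgebra by (simp add: is_coalgebra_def)
lemma coassoc_teq: "teq3 sc sc sc
            (lsum (cop x) (\<lambda>a b. map (\<lambda>(c, d). (c, d, b)) (cop a)))
            (lsum (cop x) (\<lambda>a b. map (\<lambda>(c, d). (a, c, d)) (cop b)))"
  using coalgebra by (simp add: is_coalgebra_def)
lemma counit: "ssum (cop x) (\<lambda>a b. sc (cou a) b) = x" "ssum (cop x) (\<lambda>a b. sc (cou b) a) = x"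
  using coalgebra by (simp_all add: is_coalgebra_def)
lemma ant_lin: "lin sc sc ant" using has_antipode by (simp add: is_antipode_def)
lemma antipode: "ssum (cop x) (\<lambda>a b. mul a (ant b)) = sc (cou x) one"
   "ssum (cop x) (\<lambda>a b. mul (ant a) b) = sc (cou x) one"
  using has_antipode by (simp_all add: is_antipode_def)
lemma act_bilin: "bilin sc sc sc act" using is_ydph by (simp add: is_ydph_def)
lemma cop_act: "teq2 sc sc (cop (act x y))
          (lsum (cop x) (\<lambda>x1 x2. lsum (cop y) (\<lambda>y1 y2. [(act x1 y1, act x2 y2)])))"
  using is_ydph by (simp add: is_ydph_def)
lemma cou_act: "cou (act x y) = cou x * cou y" using is_ydph by (simp add: is_ydph_def)
lemma act_mul: "act x (mul y z) = ssum (cop x) (\<lambda>a b. mul (act a y) (act b z))"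
  using is_ydph by (simp add: is_ydph_def)
lemma act_act: "act x (act y z) = act (bu x y) z" using is_ydph by (simp add: is_ydph_def)
lemma beta_conv_inv: "conv_inv A act \<beta>"
proof -
  have "\<exists>\<beta>. conv_inv A act \<beta>" using is_ydph by (simp add: is_ydph_def)
  then show ?thesis unfolding betaOf_def by (rule someI_ex)
qed
lemma beta_bilin: "bilin sc sc sc \<beta>" using beta_conv_inv by (simp add: conv_inv_def)
lemma act_beta_conv: "ssum (cop x) (\<lambda>a b. act a (\<beta> b y)) = sc (cou x) y"
  and beta_act_conv: "ssum (cop x) (\<lambda>a b. \<beta> a (act b y)) = sc (cou x) y"
  using beta_conv_inv by (simp_all add: conv_inv_def)
lemma cou_mul: "cou (mul a b) = cou a * cou b" and cou_one[simp]: "cou one = 1"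
  and cop_one: "teq2 sc sc (cop one) [(one, one)]"
  using is_ydph by (simp_all add: is_ydph_def unit_counit_compat_def)
lemma cop_mul: "teq2 sc sc (cop (mul x y))
          (lw4 cop x (\<lambda>x1 x2 x3 x4. lsum (cop y) (\<lambda>y1 y2.
              [(mul x1 (act x2 (\<beta> x4 y1)), mul x3 y2)])))"
  using is_ydph by (simp add: is_ydph_def)
lemma cop_Sr: "teq2 sc sc (cop (Sa x)) (lsum (cop x) (\<lambda>a b. [(Sa b, Sa a)]))"
  using is_ydph by (simp add: is_ydph_def)
lemma act_lhp_swap: "teq2 sc sc
          (lsum (cop x) (\<lambda>x1 x2. lsum (cop y) (\<lambda>y1 y2. [(act x1 y1, lh x2 y2)])))
          (lsum (cop x) (\<lambda>x1 x2. lsum (cop y) (\<lambda>y1 y2. [(act x2 y2, lh x1 y1)])))"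
  using is_ydph by (simp add: is_ydph_def)

lemma vector_space_simps[simp]: "vector_space sc" "vector_space ((*) :: 'f \<Rightarrow> 'f \<Rightarrow> 'f)"
  by (rule sc_vector_space, rule vector_space_mult)

lemma lin_mulL[simp]: "lin s sc f \<Longrightarrow> lin s sc (\<lambda>x. mul (f x) c)" by (rule lin_bilin_L[OF mul_bilin])
lemma lin_mulR[simp]: "lin s sc f \<Longrightarrow> lin s sc (\<lambda>x. mul c (f x))" by (rule lin_bilin_R[OF mul_bilin])

lemma lin_actL[simp]: "lin s sc f \<Longrightarrow> lin s sc (\<lambda>x. act (f x) c)" by (rule lin_bilin_L[OF act_bilin])
lemma lin_actR[simp]: "lin s sc f \<Longrightarrow> lin s sc (\<lambda>x. act c (f x))" by (rule lin_bilin_R[OF act_bilin])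

lemma lin_betaL[simp]: "lin s sc f \<Longrightarrow> lin s sc (\<lambda>x. \<beta> (f x) c)" by (rule lin_bilin_L[OF beta_bilin])
lemma lin_betaR[simp]: "lin s sc f \<Longrightarrow> lin s sc (\<lambda>x. \<beta> c (f x))" by (rule lin_bilin_R[OF beta_bilin])

lemma lin_antI[simp]: "lin s sc f \<Longrightarrow> lin s sc (\<lambda>x. ant (f x))" by (rule lin_comp[OF ant_lin])
lemma lin_couI[simp]: "lin s sc f \<Longrightarrow> lin s (*) (\<lambda>x. cou (f x))" by (rule lin_comp[OF cou_lin])

lemma sc_simps[simp]:
  "mul (sc c x) y = sc c (mul x y)" "mul x (sc c y) = sc c (mul x y)"
  "act (sc c x) y = sc c (act x y)" "act x (sc c y) = sc c (act x y)"
  "\<beta> (sc c x) y = sc c (\<beta> x y)" "\<beta> x (sc c y) = sc c (\<beta> x y)"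
  "ant (sc c x) = sc c (ant x)" "cou (sc c x) = c * cou x"
  "sc a (sc b x) = sc (a * b) x" "sc 1 x = x"
  using bilin_scL[OF mul_bilin] bilin_scR[OF mul_bilin] bilin_scL[OF act_bilin] bilin_scR[OF act_bilin]
    bilin_scL[OF beta_bilin] bilin_scR[OF beta_bilin] lin_scale[OF ant_lin] lin_scale[OF cou_lin]
    vector_space.vector_space_assms(3,4)[OF sc_vector_space] by auto

lemma lin_ssum_cop:
  assumes W: "vector_space sW" and G: "bilin sc sc sW G"
  shows "lin sc sW (\<lambda>x. ssum (cop x) G)"
proof -
  interpret W: vector_space sW by fact
  have G1: "\<And>c a b. G (sc c a) b = sW c (G a b)" using G by (simp add: bilin_def lin_def)
  show ?thesis unfolding lin_def
  proof safe
    fix x y show "ssum (cop (x + y)) G = ssum (cop x) G + ssum (cop y) G"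
      using teq2_ssum_eq[OF W cop_add G] by simp
  next
    fix c x show "ssum (cop (sc c x)) G = sW c (ssum (cop x) G)"
      using teq2_ssum_eq[OF W cop_scale G] by (simp only: ssum_map1 G1 ssum_scale[OF W])
  qed
qed

lemma lin_copI[simp]: "vector_space sW \<Longrightarrow> lin s sc f \<Longrightarrow> bilin sc sc sW G \<Longrightarrow> lin s sW (\<lambda>x. ssum (cop (f x)) G)"
  by (rule lin_comp[OF lin_ssum_cop])

lemma ssum_cop_ssum: "vector_space sW \<Longrightarrow> bilin sc sc sW G \<Longrightarrow>
   ssum (cop (ssum t F)) G = ssum t (\<lambda>a b. ssum (cop (F a b)) G)"
  by (rule lin_ssum_distrib[OF lin_ssum_cop])

lemma coassoc:
  assumes W: "vector_space sW" and F: "trilin sc sc sc sW F"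
  shows "ssum (cop x) (\<lambda>a b. ssum (cop a) (\<lambda>c d. F c d b)) = ssum (cop x) (\<lambda>a b. ssum (cop b) (\<lambda>c d. F a c d))"
  using teq3_ssum3_eq[OF W coassoc_teq F] by simp

lemma counit_left:
  assumes W: "vector_space sW" and G: "lin sc sW G"
  shows "ssum (cop x) (\<lambda>a b. sW (cou a) (G b)) = G x"
proof -
  have "G x = G (ssum (cop x) (\<lambda>a b. sc (cou a) b))" using counit by simp
  also have "\<dots> = ssum (cop x) (\<lambda>a b. sW (cou a) (G b))"
    by (simp add: lin_ssum_distrib[OF G] lin_scale[OF G])
  finally show ?thesis by simp
qed

lemma counit_right:
  assumes W: "vector_space sW" and G: "lin sc sW G"
  shows "ssum (cop x) (\<lambda>a b. sW (cou b) (G a)) = G x"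
proof -
  have "G x = G (ssum (cop x) (\<lambda>a b. sc (cou b) a))" using counit by simp
  also have "\<dots> = ssum (cop x) (\<lambda>a b. sW (cou b) (G a))"
    by (simp add: lin_ssum_distrib[OF G] lin_scale[OF G])
  finally show ?thesis by simp
qed

lemma coassoc_H: "trilin sc sc sc sc F \<Longrightarrow> ssum (cop x) (\<lambda>a b. ssum (cop a) (\<lambda>c d. F c d b)) = ssum (cop x) (\<lambda>a b. ssum (cop b) (\<lambda>c d. F a c d))"
  by (rule coassoc[OF sc_vector_space])

lemma coassoc_scalar: "trilin sc sc sc (*) F \<Longrightarrow> ssum (cop x) (\<lambda>a b. ssum (cop a) (\<lambda>c d. F c d b)) = ssum (cop x) (\<lambda>a b. ssum (cop b) (\<lambda>c d. F a c d))"
  by (rule coassoc[OF vector_space_mult])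

lemma counit_left_H[simp]: "lin sc sc G \<Longrightarrow> ssum (cop x) (\<lambda>a b. sc (cou a) (G b)) = G x" by (rule counit_left[OF sc_vector_space])
lemma counit_right_H[simp]: "lin sc sc G \<Longrightarrow> ssum (cop x) (\<lambda>a b. sc (cou b) (G a)) = G x" by (rule counit_right[OF sc_vector_space])

lemma counit_left_scalar[simp]: "lin sc (*) G \<Longrightarrow> ssum (cop x) (\<lambda>a b. cou a * G b) = G x" by (rule counit_left[OF vector_space_mult])
lemma counit_right_scalar[simp]: "lin sc (*) G \<Longrightarrow> ssum (cop x) (\<lambda>a b. cou b * G a) = G x" by (rule counit_right[OF vector_space_mult])

lemma counit_counit[simp]: "ssum (cop x) (\<lambda>a b. sc (cou a * cou b) v) = sc (cou x) v"
proof -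
  have "ssum (cop x) (\<lambda>a b. sc (cou a * cou b) v) = ssum (cop x) (\<lambda>a b. sc (cou a) (sc (cou b) v))"
    using vector_space.vector_space_assms(3)[OF sc_vector_space] by simp
  also have "\<dots> = sc (cou x) v" by (rule counit_left_H) simp
  finally show ?thesis .
qed

lemma ssum_scale_sc: "ssum t (\<lambda>a b. sc c (F a b)) = sc c (ssum t F)"
  by (rule ssum_scale[OF sc_vector_space, symmetric])

lemma sc_mult: "sc (a * b) w = sc a (sc b w)" by simp

lemma counit2_left: assumes B: "bilin sc sc sc B"
  shows "ssum (cop x)(\<lambda>p x4. ssum (cop y)(\<lambda>q y4. sc (cou p * cou q) (B x4 y4))) = B x y"
proof -
  have "ssum (cop x)(\<lambda>p x4. ssum (cop y)(\<lambda>q y4. sc (cou p * cou q) (B x4 y4)))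
      = ssum (cop x)(\<lambda>p x4. sc (cou p) (ssum (cop y)(\<lambda>q y4. sc (cou q) (B x4 y4))))"
    by (simp only: sc_mult ssum_scale_sc)
  also have "\<dots> = ssum (cop y)(\<lambda>q y4. sc (cou q) (B x y4))"
    by (rule counit_left_H) (simp add: lin_comp[OF bilinD2[OF B]] lin_comp[OF bilinD1[OF B]])
  also have "\<dots> = B x y" by (rule counit_left_H) (simp add: lin_comp[OF bilinD1[OF B]])
  finally show ?thesis .
qed

lemma counit2_right: assumes B: "bilin sc sc sc B"
  shows "ssum (cop x)(\<lambda>x1 r. ssum (cop y)(\<lambda>y1 s. sc (cou r * cou s) (B x1 y1))) = B x y"
proof -
  have "ssum (cop x)(\<lambda>x1 r. ssum (cop y)(\<lambda>y1 s. sc (cou r * cou s) (B x1 y1)))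
      = ssum (cop x)(\<lambda>x1 r. sc (cou r) (ssum (cop y)(\<lambda>y1 s. sc (cou s) (B x1 y1))))"
    by (simp only: sc_mult ssum_scale_sc)
  also have "\<dots> = ssum (cop y)(\<lambda>y1 s. sc (cou s) (B x y1))"
    by (rule counit_right_H) (simp add: lin_comp[OF bilinD2[OF B]] lin_comp[OF bilinD1[OF B]])
  also have "\<dots> = B x y" by (rule counit_right_H) (simp add: lin_comp[OF bilinD1[OF B]])
  finally show ?thesis .
qed

lemma counit_scaled: "ssum (cop a) (\<lambda>a1 a2. sc (c * cou a1) a2) = sc c a"
  by (simp only: sc_mult ssum_scale_sc counit)

lemma ssum_cop_one: "vector_space sW \<Longrightarrow> bilin sc sc sW G \<Longrightarrow> ssum (cop one) G = G one one"
  using teq2_ssum_eq[OF _ cop_one] by fastforce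

lemma ssum_cop_one_H[simp]: "bilin sc sc sc G \<Longrightarrow> ssum (cop one) G = G one one"
  by (rule ssum_cop_one; simp)

lemma ssum_cop_one_scalar[simp]: "bilin sc sc (*) G' \<Longrightarrow> ssum (cop one) G' = G' one one"
  by (rule ssum_cop_one; simp)+

lemma cop_mul_ssum: assumes W: "vector_space sW" and G: "bilin sc sc sW G"
  shows "ssum (cop (mul x w)) G = ssum (cop x)(\<lambda>a b. ssum (cop a)(\<lambda>x1 x2. ssum (cop b)(\<lambda>x3 x4.
     ssum (cop w)(\<lambda>w1 w2. G (mul x1 (act x2 (\<beta> x4 w1))) (mul x3 w2)))))"
  using teq2_ssum_eq[OF W cop_mul G] by (simp add: lw4_def lw3_def)

lemma cop_act_ssum: assumes W: "vector_space sW" and G: "bilin sc sc sW G"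
  shows "ssum (cop (act x y)) G = ssum (cop x)(\<lambda>a b. ssum (cop y)(\<lambda>c d. G (act a c) (act b d)))"
  using teq2_ssum_eq[OF W cop_act G] by simp

lemma cop_Sr_ssum: assumes W: "vector_space sW" and G: "bilin sc sc sW G"
  shows "ssum (cop (Sa x)) G = ssum (cop x) (\<lambda>a b. G (Sa b) (Sa a))"
  using teq2_ssum_eq[OF W cop_Sr G] by simp

lemma act_lhp_swap_ssum: assumes W: "vector_space sW" and K: "bilin sc sc sW K"
  shows "ssum (cop x)(\<lambda>x1 x2. ssum (cop y)(\<lambda>y1 y2. K (act x1 y1) (lh x2 y2)))
       = ssum (cop x)(\<lambda>x1 x2. ssum (cop y)(\<lambda>y1 y2. K (act x2 y2) (lh x1 y1)))"
  using teq2_ssum_eq[OF W act_lhp_swap K] by simp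

lemma bul_eq: "bu x y = ssum (cop x) (\<lambda>a b. mul a (act b y))"
  by (simp add: bul_def)

text \<open>\<open>\<alpha>\<^sub>\<rightharpoonup>(1)\<close> is invertible with inverse \<open>\<beta>\<^sub>\<rightharpoonup>(1)\<close>, and idempotent because \<open>1 \<bullet> 1 = 1\<close>.\<close>

lemma act_one[simp]: "act one z = z"
proof -
  have act_one_beta: "act one (\<beta> one y) = y" for y
    using act_beta_conv[of one y] by (simp add: ssum_cop_one bilin_def)
  have beta_one_act: "\<beta> one (act one y) = y" for y
    using beta_act_conv[of one y] by (simp add: ssum_cop_one bilin_def)
  have "act one (mul one (\<beta> one one)) = mul (act one one) (act one (\<beta> one one))"
    using act_mul[of one one] by (simp add: ssum_cop_one bilin_def)
  then have "act one one = one" by (simp add: act_one_beta)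
  then have "bu one one = one" by (simp add: bul_eq ssum_cop_one bilin_def)
  then have "act one (act one z) = act one z" using act_act[of one one z] by simp
  then show ?thesis by (metis beta_one_act)
qed

lemma act_unit[simp]: "act x one = sc (cou x) one"
proof -
  have "sc (cou x) one = ssum (cop x) (\<lambda>a b. act a (mul one (\<beta> b one)))"
    by (simp add: act_beta_conv)
  also have "\<dots> = ssum (cop x) (\<lambda>a b. ssum (cop a) (\<lambda>c d. mul (act c one) (act d (\<beta> b one))))"
    by (rule ssum_cong) (subst act_mul[symmetric], simp)
  also have "\<dots> = ssum (cop x) (\<lambda>a b. ssum (cop b) (\<lambda>c d. mul (act a one) (act c (\<beta> d one))))"
    by (rule coassoc_H) (simp add: trilin_def bilin_def)
  also have "\<dots> = ssum (cop x) (\<lambda>a b. mul (act a one) (sc (cou b) one))"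
    by (rule ssum_cong) (simp add: act_beta_conv flip: lin_ssum_distrib[OF bilinD1[OF mul_bilin]])
  also have "\<dots> = act x one" by simp
  finally show ?thesis by simp
qed

section \<open>The subadjacent Hopf algebra\<close>

lemma bul_bilin: "bilin sc sc sc bu"
  unfolding bilin_def bul_eq by (simp add: bilin_def)

lemma lin_bulL[simp]: "lin s sc f \<Longrightarrow> lin s sc (\<lambda>x. bu (f x) c)" by (rule lin_bilin_L[OF bul_bilin])
lemma lin_bulR[simp]: "lin s sc f \<Longrightarrow> lin s sc (\<lambda>x. bu c (f x))" by (rule lin_bilin_R[OF bul_bilin])

lemma bul_sc[simp]: "bu (sc c x) y = sc c (bu x y)" "bu x (sc c y) = sc c (bu x y)"
  using bilin_scL[OF bul_bilin] bilin_scR[OF bul_bilin] by auto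

lemma bul_one_left[simp]: "bu one y = y" by (simp add: bul_eq bilin_def)

lemma bul_one_right[simp]: "bu x one = x" by (simp add: bul_eq)

lemma beta_act_cop_collapse: assumes W: "vector_space sW" and H: "bilin sc sc sW H"
  shows "ssum (cop u) (\<lambda>p q. ssum (cop (act q y)) (\<lambda>w1 w2. H (\<beta> p w1) w2))
       = ssum (cop y) (\<lambda>y1 y2. H y1 (act u y2))"
proof -
  interpret W: vector_space sW by fact
  note [simp] = W
  have H1: "lin sc sW (\<lambda>w. H w z)" for z using H by (simp add: bilin_def)
  have H2: "lin sc sW (H w)" for w using H by (simp add: bilin_def)
  have Hc: "H (sc c w) z = sW c (H w z)" for c w z using H by (simp add: bilin_def lin_def)
  have "ssum (cop u) (\<lambda>p q. ssum (cop (act q y)) (\<lambda>w1 w2. H (\<beta> p w1) w2))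
     = ssum (cop u) (\<lambda>p q. ssum (cop q) (\<lambda>c d. ssum (cop y) (\<lambda>y1 y2. H (\<beta> p (act c y1)) (act d y2))))"
    by (rule ssum_cong) (rule cop_act_ssum[OF W], simp add: bilin_def H1 H2 lin_comp[OF H1] lin_comp[OF H2])
  also have "\<dots> = ssum (cop u) (\<lambda>a b. ssum (cop a) (\<lambda>c d. ssum (cop y) (\<lambda>y1 y2. H (\<beta> c (act d y1)) (act b y2))))"
    by (rule coassoc[OF W, symmetric]) (simp add: trilin_def bilin_def lin_comp[OF H1] lin_comp[OF H2])
  also have "\<dots> = ssum (cop u) (\<lambda>a b. ssum (cop y) (\<lambda>y1 y2. ssum (cop a) (\<lambda>c d. H (\<beta> c (act d y1)) (act b y2))))"
    by (rule ssum_cong) (rule ssum_swap)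
  also have "\<dots> = ssum (cop u) (\<lambda>a b. ssum (cop y) (\<lambda>y1 y2. H (sc (cou a) y1) (act b y2)))"
    by (intro ssum_cong) (simp add: beta_act_conv flip: lin_ssum_distrib[OF H1])
  also have "\<dots> = ssum (cop u) (\<lambda>a b. sW (cou a) (ssum (cop y) (\<lambda>y1 y2. H y1 (act b y2))))"
    by (intro ssum_cong) (simp add: Hc ssum_scale[OF W])
  also have "\<dots> = ssum (cop y) (\<lambda>y1 y2. H y1 (act u y2))"
    by (rule counit_left[OF W]) (simp add: lin_comp[OF H2])
  finally show ?thesis .
qed

lemma cop_bul_ssum: assumes W: "vector_space sW" and G: "bilin sc sc sW G"
  shows "ssum (cop (bu x y)) G = ssum (cop x) (\<lambda>a b. ssum (cop y) (\<lambda>c d. G (bu a c) (bu b d)))"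
proof -
  interpret W: vector_space sW by fact
  note [simp] = W
  have G1: "lin sc sW (\<lambda>w. G w z)" for z using G by (simp add: bilin_def)
  have G2: "lin sc sW (G w)" for w using G by (simp add: bilin_def)
  note GG = lin_comp[OF G1] lin_comp[OF G2]
  have "ssum (cop (bu x y)) G = ssum (cop x) (\<lambda>a b. ssum (cop (mul a (act b y))) G)"
    unfolding bul_eq by (rule ssum_cop_ssum[OF W G])
  also have "\<dots> = ssum (cop x) (\<lambda>a b. ssum (cop a)(\<lambda>a1 a2. ssum (cop a1)(\<lambda>x1 x2. ssum (cop a2)(\<lambda>x3 x4.
     ssum (cop (act b y))(\<lambda>w1 w2. G (mul x1 (act x2 (\<beta> x4 w1))) (mul x3 w2))))))"
    by (rule ssum_cong) (rule cop_mul_ssum[OF W G])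
  also have "\<dots> = ssum (cop x) (\<lambda>a1 r. ssum (cop r)(\<lambda>a2 b. ssum (cop a1)(\<lambda>x1 x2. ssum (cop a2)(\<lambda>x3 x4.
     ssum (cop (act b y))(\<lambda>w1 w2. G (mul x1 (act x2 (\<beta> x4 w1))) (mul x3 w2))))))"
    by (rule coassoc[OF W]) (simp add: trilin_def bilin_def GG)
  also have "\<dots> = ssum (cop x) (\<lambda>a1 r. ssum (cop a1)(\<lambda>x1 x2. ssum (cop r)(\<lambda>a2 b. ssum (cop a2)(\<lambda>x3 x4.
     ssum (cop (act b y))(\<lambda>w1 w2. G (mul x1 (act x2 (\<beta> x4 w1))) (mul x3 w2))))))"
    by (rule ssum_cong) (rule ssum_swap)
  also have "\<dots> = ssum (cop x) (\<lambda>a1 r. ssum (cop a1)(\<lambda>x1 x2. ssum (cop r)(\<lambda>x3 s. ssum (cop s)(\<lambda>x4 b.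
     ssum (cop (act b y))(\<lambda>w1 w2. G (mul x1 (act x2 (\<beta> x4 w1))) (mul x3 w2))))))"
    by (rule ssum_cong, rule ssum_cong, rule coassoc[OF W], simp add: trilin_def bilin_def GG)
  also have "\<dots> = ssum (cop x) (\<lambda>a1 r. ssum (cop a1)(\<lambda>x1 x2. ssum (cop r)(\<lambda>x3 s.
     ssum (cop y)(\<lambda>y1 y2. G (mul x1 (act x2 y1)) (mul x3 (act s y2))))))"
    by (intro ssum_cong) (rule beta_act_cop_collapse[OF W], simp add: bilin_def GG)
  also have "\<dots> = ssum (cop x) (\<lambda>a1 r. ssum (cop r)(\<lambda>x3 s. ssum (cop a1)(\<lambda>x1 x2.
     ssum (cop y)(\<lambda>y1 y2. G (mul x1 (act x2 y1)) (mul x3 (act s y2))))))"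
    by (rule ssum_cong) (rule ssum_swap)
  also have "\<dots> = ssum (cop x) (\<lambda>a b. ssum (cop y) (\<lambda>c d. G (bu a c) (bu b d)))"
    unfolding bul_eq
    by (simp add: lin_ssum_distrib[OF G1] lin_ssum_distrib[OF G2] ssum_swap[where t="cop y"])
  finally show ?thesis .
qed

lemma cou_bul: "cou (bu x y) = cou x * cou y"
  unfolding bul_eq by (simp add: lin_ssum_distrib[OF cou_lin] cou_mul cou_act)

lemma bul_assoc: "bu (bu x y) z = bu x (bu y z)"
proof -
  have "bu (bu x y) z = ssum (cop x)(\<lambda>a b. ssum (cop y)(\<lambda>c d. mul (bu a c) (act (bu b d) z)))"
    unfolding bul_eq[of "bu x y"] by (rule cop_bul_ssum[OF sc_vector_space]) (simp add: bilin_def)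
  also have "\<dots> = ssum (cop x)(\<lambda>a b. ssum (cop y)(\<lambda>c d. ssum (cop a)(\<lambda>a1 a2. mul a1 (mul (act a2 c) (act (bu b d) z)))))"
    unfolding bul_eq[of _ c for c] by (simp add: lin_ssum_distrib[OF bilinD2[OF mul_bilin]] mul_assoc)
  also have "\<dots> = ssum (cop x)(\<lambda>a b. ssum (cop a)(\<lambda>a1 a2. ssum (cop y)(\<lambda>c d. mul a1 (mul (act a2 c) (act (bu b d) z)))))"
    by (rule ssum_cong) (rule ssum_swap)
  also have "\<dots> = ssum (cop x)(\<lambda>a b. ssum (cop b)(\<lambda>b1 b2. ssum (cop y)(\<lambda>c d. mul a (mul (act b1 c) (act (bu b2 d) z)))))"
    by (rule coassoc_H) (simp add: trilin_def bilin_def)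
  also have "\<dots> = ssum (cop x)(\<lambda>a b. ssum (cop y)(\<lambda>c d. ssum (cop b)(\<lambda>b1 b2. mul a (mul (act b1 c) (act (bu b2 d) z)))))"
    by (rule ssum_cong) (rule ssum_swap)
  also have "\<dots> = bu x (bu y z)"
    unfolding bul_eq[of x] bul_eq[of y]
    by (simp add: lin_ssum_distrib[OF bilinD1[OF mul_bilin]] lin_ssum_distrib[OF bilinD1[OF act_bilin]] act_mul act_act)
  finally show ?thesis .
qed

lemma Sr_eq: "Sa x = ssum (cop x) (\<lambda>a b. \<beta> a (ant b))" by (simp add: Sr_def)

lemma Sr_lin: "lin sc sc Sa"
proof -
  have "lin sc sc (\<lambda>x. ssum (cop x) (\<lambda>a b. \<beta> a (ant b)))" by (simp add: bilin_def)
  then show ?thesis by (simp add: Sr_eq[abs_def])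
qed

lemma lin_SrI[simp]: "lin s sc f \<Longrightarrow> lin s sc (\<lambda>x. Sa (f x))" by (rule lin_comp[OF Sr_lin])

lemma Sr_sc[simp]: "Sa (sc c x) = sc c (Sa x)" by (rule lin_scale[OF Sr_lin])

lemmas ssum_distribs = lin_ssum_distrib[OF bilinD1[OF bul_bilin]] lin_ssum_distrib[OF bilinD2[OF bul_bilin]]
  lin_ssum_distrib[OF bilinD1[OF mul_bilin]] lin_ssum_distrib[OF bilinD2[OF mul_bilin]]
  lin_ssum_distrib[OF bilinD1[OF act_bilin]] lin_ssum_distrib[OF bilinD2[OF act_bilin]]
  lin_ssum_distrib[OF bilinD1[OF beta_bilin]] lin_ssum_distrib[OF bilinD2[OF beta_bilin]]
  lin_ssum_distrib[OF Sr_lin] lin_ssum_distrib[OF ant_lin] lin_ssum_distrib[OF cou_lin]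

lemma Sr_antipode_right: "ssum (cop x) (\<lambda>a b. bu a (Sa b)) = sc (cou x) one"
proof -
  have "ssum (cop x) (\<lambda>a b. bu a (Sa b)) = ssum (cop x) (\<lambda>a b. ssum (cop a) (\<lambda>a1 a2. ssum (cop b) (\<lambda>b1 b2. mul a1 (act a2 (\<beta> b1 (ant b2))))))"
    unfolding bul_eq Sr_eq by (simp add: lin_ssum_distrib[OF bilinD1[OF act_bilin]] lin_ssum_distrib[OF bilinD1[OF mul_bilin]])
  also have "\<dots> = ssum (cop x) (\<lambda>a1 r. ssum (cop r) (\<lambda>a2 b. ssum (cop b) (\<lambda>b1 b2. mul a1 (act a2 (\<beta> b1 (ant b2))))))"
    by (rule coassoc_H) (simp add: trilin_def bilin_def)
  also have "\<dots> = ssum (cop x) (\<lambda>a1 r. ssum (cop r) (\<lambda>u b2. ssum (cop u) (\<lambda>a2 b1. mul a1 (act a2 (\<beta> b1 (ant b2))))))"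
    by (rule ssum_cong) (rule coassoc_H[symmetric], simp add: trilin_def bilin_def)
  also have "\<dots> = ssum (cop x) (\<lambda>a1 r. ssum (cop r) (\<lambda>u b2. sc (cou u) (mul a1 (ant b2))))"
    by (intro ssum_cong) (simp add: act_beta_conv flip: lin_ssum_distrib[OF bilinD1[OF mul_bilin]])
  also have "\<dots> = ssum (cop x) (\<lambda>a1 r. mul a1 (ant r))"
    by (intro ssum_cong) simp
  also have "\<dots> = sc (cou x) one" by (rule antipode)
  finally show ?thesis .
qed

text \<open>\<open>\<alpha>\<^sub>\<rightharpoonup> \<circ> S\<^sub>\<rightharpoonup>\<close> is a convolution inverse of \<open>\<alpha>\<^sub>\<rightharpoonup>\<close>, so it is \<open>\<beta>\<^sub>\<rightharpoonup>\<close>.\<close>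

lemma act_Sr: "act (Sa x) y = \<beta> x y"
proof -
  have aux: "ssum (cop x)(\<lambda>a b. act a (act (Sa b) y)) = sc (cou x) y" for x
  proof -
    have "ssum (cop x)(\<lambda>a b. act a (act (Sa b) y)) = act (ssum (cop x) (\<lambda>a b. bu a (Sa b))) y"
      by (simp add: act_act lin_ssum_distrib[OF bilinD2[OF act_bilin]])
    then show ?thesis by (simp add: Sr_antipode_right)
  qed
  have "\<beta> x y = ssum (cop x)(\<lambda>a b. \<beta> a (sc (cou b) y))" by simp
  also have "\<dots> = ssum (cop x)(\<lambda>a b. ssum (cop b)(\<lambda>c d. \<beta> a (act c (act (Sa d) y))))"
    by (rule ssum_cong) (simp add: aux flip: lin_ssum_distrib[OF bilinD1[OF beta_bilin]])
  also have "\<dots> = ssum (cop x)(\<lambda>u d. ssum (cop u)(\<lambda>a c. \<beta> a (act c (act (Sa d) y))))"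
    by (rule coassoc_H[symmetric]) (simp add: trilin_def bilin_def)
  also have "\<dots> = act (Sa x) y"
    by (simp add: beta_act_conv)
  finally show ?thesis by simp
qed

lemma beta_mul: "\<beta> x (mul y z) = ssum (cop x) (\<lambda>a b. mul (\<beta> b y) (\<beta> a z))"
proof -
  have "\<beta> x (mul y z) = act (Sa x) (mul y z)" by (simp add: act_Sr)
  also have "\<dots> = ssum (cop x) (\<lambda>a b. mul (act (Sa b) y) (act (Sa a) z))"
    unfolding act_mul by (rule cop_Sr_ssum[OF sc_vector_space]) (simp add: bilin_def)
  finally show ?thesis by (simp add: act_Sr)
qed

lemma cou_Sr[simp]: "cou (Sa x) = cou x"
proof -
  have "cou x = cou (ssum (cop x) (\<lambda>a b. bu a (Sa b)))" by (simp add: Sr_antipode_right)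
  also have "\<dots> = ssum (cop x) (\<lambda>a b. cou a * cou (Sa b))"
    by (simp add: lin_ssum_distrib[OF cou_lin] cou_bul)
  also have "\<dots> = cou (Sa x)" by (rule counit_left_scalar) simp
  finally show ?thesis by simp
qed

lemma Sr_antipode_left: "ssum (cop x) (\<lambda>a b. bu (Sa a) b) = sc (cou x) one"
proof -
  have "ssum (cop x) (\<lambda>a b. bu (Sa a) b) = ssum (cop x) (\<lambda>a b. ssum (cop a) (\<lambda>a1 a2. mul (Sa a2) (\<beta> a1 b)))"
    unfolding bul_eq by (intro ssum_cong) (rule cop_Sr_ssum[OF sc_vector_space, THEN trans], simp add: bilin_def, simp add: act_Sr)
  also have "\<dots> = ssum (cop x) (\<lambda>a b. ssum (cop a) (\<lambda>a1 a2. ssum (cop a2) (\<lambda>c d. mul (\<beta> c (ant d)) (\<beta> a1 b))))"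
    unfolding Sr_eq by (simp add: lin_ssum_distrib[OF bilinD2[OF mul_bilin]])
  also have "\<dots> = ssum (cop x) (\<lambda>a1 r. ssum (cop r) (\<lambda>a2 b. ssum (cop a2) (\<lambda>c d. mul (\<beta> c (ant d)) (\<beta> a1 b))))"
    by (rule coassoc_H) (simp add: trilin_def bilin_def)
  also have "\<dots> = ssum (cop x) (\<lambda>a1 r. ssum (cop r) (\<lambda>c s. ssum (cop s) (\<lambda>d b. mul (\<beta> c (ant d)) (\<beta> a1 b))))"
    by (rule ssum_cong) (rule coassoc_H, simp add: trilin_def bilin_def)
  also have "\<dots> = ssum (cop x) (\<lambda>u s. ssum (cop u) (\<lambda>a1 c. ssum (cop s) (\<lambda>d b. mul (\<beta> c (ant d)) (\<beta> a1 b))))"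
    by (rule coassoc_H[symmetric]) (simp add: trilin_def bilin_def)
  also have "\<dots> = ssum (cop x) (\<lambda>u s. ssum (cop s) (\<lambda>d b. ssum (cop u) (\<lambda>a1 c. mul (\<beta> c (ant d)) (\<beta> a1 b))))"
    by (rule ssum_cong) (rule ssum_swap)
  also have "\<dots> = ssum (cop x) (\<lambda>u s. \<beta> u (ssum (cop s) (\<lambda>d b. mul (ant d) b)))"
    by (simp add: beta_mul lin_ssum_distrib[OF bilinD1[OF beta_bilin]])
  also have "\<dots> = ssum (cop x) (\<lambda>u s. sc (cou s) (sc (cou u) one))"
    by (simp add: antipode flip: act_Sr)
  also have "\<dots> = sc (cou x) one"
    by (simp add: mult.commute)
  finally show ?thesis .
qed

lemma Sr_one[simp]: "Sa one = one"
  using Sr_antipode_right[of one] by (simp add: bilin_def)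

lemma Sr_bul: "Sa (bu x y) = bu (Sa y) (Sa x)"
proof -
  \<comment> \<open>\<open>T\<close> collapses to either side, by the right resp. the left antipode identity.\<close>
  define T where "T = ssum (cop x)(\<lambda>x1 r. ssum (cop y)(\<lambda>y1 s. ssum (cop r)(\<lambda>x2 x3. ssum (cop s)(\<lambda>y2 y3.
        bu (bu (Sa y1) (Sa x1)) (bu (bu x2 y2) (Sa (bu x3 y3)))))))"
  have "T = ssum (cop x)(\<lambda>x1 r. ssum (cop y)(\<lambda>y1 s. bu (bu (Sa y1) (Sa x1)) (ssum (cop (bu r s)) (\<lambda>z1 z2. bu z1 (Sa z2)))))"
    unfolding T_def by (simp add: cop_bul_ssum[OF sc_vector_space] bilin_def flip: ssum_distribs)
  also have "\<dots> = ssum (cop x)(\<lambda>x1 r. ssum (cop y)(\<lambda>y1 s. sc (cou r * cou s) (bu (Sa y1) (Sa x1))))"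
    by (simp add: Sr_antipode_right cou_bul)
  also have "\<dots> = bu (Sa y) (Sa x)"
    by (rule counit2_right) (simp add: bilin_def)
  finally have T1: "T = bu (Sa y) (Sa x)" .
  have "T = ssum (cop x)(\<lambda>x1 r. ssum (cop r)(\<lambda>x2 x3. ssum (cop y)(\<lambda>y1 s. ssum (cop s)(\<lambda>y2 y3.
        bu (bu (Sa y1) (bu (bu (Sa x1) x2) y2)) (Sa (bu x3 y3))))))"
    unfolding T_def by (intro ssum_cong) (subst ssum_swap, simp add: bul_assoc)
  also have "\<dots> = ssum (cop x)(\<lambda>p x3. ssum (cop p)(\<lambda>x1 x2. ssum (cop y)(\<lambda>y1 s. ssum (cop s)(\<lambda>y2 y3.
        bu (bu (Sa y1) (bu (bu (Sa x1) x2) y2)) (Sa (bu x3 y3))))))"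
    by (rule coassoc_H[symmetric]) (simp add: trilin_def bilin_def)
  also have "\<dots> = ssum (cop x)(\<lambda>p x3. ssum (cop p)(\<lambda>x1 x2. ssum (cop y)(\<lambda>q y3. ssum (cop q)(\<lambda>y1 y2.
        bu (bu (Sa y1) (bu (bu (Sa x1) x2) y2)) (Sa (bu x3 y3))))))"
    by (rule ssum_cong, rule ssum_cong, rule coassoc_H[symmetric]) (simp add: trilin_def bilin_def)
  also have "\<dots> = ssum (cop x)(\<lambda>p x3. ssum (cop y)(\<lambda>q y3. ssum (cop q)(\<lambda>y1 y2. ssum (cop p)(\<lambda>x1 x2.
        bu (bu (Sa y1) (bu (bu (Sa x1) x2) y2)) (Sa (bu x3 y3))))))"
    by (intro ssum_cong) (subst ssum_swap, intro ssum_cong, rule ssum_swap)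
  also have "\<dots> = ssum (cop x)(\<lambda>p x3. ssum (cop y)(\<lambda>q y3. sc (cou p * cou q) (Sa (bu x3 y3))))"
    by (simp add: Sr_antipode_left ssum_scale_sc flip: ssum_distribs)
  also have "\<dots> = Sa (bu x y)"
    by (rule counit2_left) (simp add: bilin_def)
  finally show ?thesis using T1 by simp
qed

lemma mul_eq_bul_act_Sr: "mul x y = ssum (cop x)(\<lambda>a b. bu a (act (Sa b) y))"
proof -
  have "ssum (cop x)(\<lambda>a b. bu a (act (Sa b) y)) = ssum (cop x)(\<lambda>a b. ssum (cop a)(\<lambda>a1 a2. mul a1 (act (bu a2 (Sa b)) y)))"
    unfolding bul_eq[of _ "act _ y"] by (simp add: act_act)
  also have "\<dots> = ssum (cop x)(\<lambda>a1 r. ssum (cop r)(\<lambda>a2 b. mul a1 (act (bu a2 (Sa b)) y)))"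
    by (rule coassoc_H) (simp add: trilin_def bilin_def)
  also have "\<dots> = mul x y"
    by (simp add: Sr_antipode_right flip: ssum_distribs)
  finally show ?thesis by simp
qed

abbreviation "B \<equiv> sub_hopf A act"

lemma sub_hopf_simps[simp]: "h_sc B = sc" "h_mul B = bu" "h_one B = one" "h_cop B = cop" "h_cou B = cou" "h_ant B = Sa"
  by (simp_all add: sub_hopf_def)

lemma sub_hopf_is_hopf_algebra: "is_hopf_algebra B"
proof -
  have a: "is_algebra B" unfolding is_algebra_def
    by (simp add: sc_vector_space bul_bilin bul_assoc)
  have c: "is_coalgebra B" using coalgebra by (simp add: is_coalgebra_def)
  have u: "unit_counit_compat B" by (simp add: unit_counit_compat_def cou_bul cop_one)
  have m: "teq2 sc sc (cop (bu x y))
          (lsum (cop x) (\<lambda>x1 x2. lsum (cop y) (\<lambda>y1 y2. [(bu x1 y1, bu x2 y2)])))" for x y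
    by (rule teq2I) (simp add: cop_bul_ssum[OF vector_space_mult])
  have s: "is_antipode B" by (simp add: is_antipode_def Sr_lin Sr_antipode_right Sr_antipode_left)
  show ?thesis unfolding is_hopf_algebra_def using a c u m s by simp
qed

section \<open>The left action \<open>\<leftharpoonup>\<close>\<close>

lemma lhp_eq: "lh x y = ssum (cop x)(\<lambda>x1 x2. ssum (cop y)(\<lambda>y1 y2. bu (bu (Sa (act x1 y1)) x2) y2))"
  by (simp add: lhp_def)

lemma lhp_bilin: "bilin sc sc sc lh"
proof -
  have "bilin sc sc sc (\<lambda>x y. ssum (cop x)(\<lambda>x1 x2. ssum (cop y)(\<lambda>y1 y2. bu (bu (Sa (act x1 y1)) x2) y2)))"
    by (simp add: bilin_def)
  then show ?thesis by (simp add: lhp_eq[abs_def])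
qed

lemma lin_lhpL[simp]: "lin s sc f \<Longrightarrow> lin s sc (\<lambda>x. lh (f x) c)" by (rule lin_bilin_L[OF lhp_bilin])
lemma lin_lhpR[simp]: "lin s sc f \<Longrightarrow> lin s sc (\<lambda>x. lh c (f x))" by (rule lin_bilin_R[OF lhp_bilin])

lemma bul_eq_act_bul_lhp: "bu x y = ssum (cop x)(\<lambda>x1 x2. ssum (cop y)(\<lambda>y1 y2. bu (act x1 y1) (lh x2 y2)))"
proof -
  have "ssum (cop x)(\<lambda>x1 x2. ssum (cop y)(\<lambda>y1 y2. bu (act x1 y1) (lh x2 y2)))
     = ssum (cop x)(\<lambda>x1 x2. ssum (cop y)(\<lambda>y1 y2. ssum (cop x2)(\<lambda>x3 x4. ssum (cop y2)(\<lambda>y3 y4.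
          bu (bu (bu (act x1 y1) (Sa (act x3 y3))) x4) y4))))"
    unfolding lhp_eq by (simp add: ssum_distribs bul_assoc)
  also have "\<dots> = ssum (cop x)(\<lambda>x1 x2. ssum (cop x2)(\<lambda>x3 x4. ssum (cop y)(\<lambda>y1 y2. ssum (cop y2)(\<lambda>y3 y4.
          bu (bu (bu (act x1 y1) (Sa (act x3 y3))) x4) y4))))"
    by (rule ssum_cong) (rule ssum_swap)
  also have "\<dots> = ssum (cop x)(\<lambda>p x4. ssum (cop p)(\<lambda>x1 x3. ssum (cop y)(\<lambda>y1 y2. ssum (cop y2)(\<lambda>y3 y4.
          bu (bu (bu (act x1 y1) (Sa (act x3 y3))) x4) y4))))"
    by (rule coassoc_H[symmetric]) (simp add: trilin_def bilin_def)
  also have "\<dots> = ssum (cop x)(\<lambda>p x4. ssum (cop p)(\<lambda>x1 x3. ssum (cop y)(\<lambda>q y4. ssum (cop q)(\<lambda>y1 y3.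
          bu (bu (bu (act x1 y1) (Sa (act x3 y3))) x4) y4))))"
    by (rule ssum_cong, rule ssum_cong, rule coassoc_H[symmetric], simp add: trilin_def bilin_def)
  also have "\<dots> = ssum (cop x)(\<lambda>p x4. ssum (cop y)(\<lambda>q y4. ssum (cop p)(\<lambda>x1 x3. ssum (cop q)(\<lambda>y1 y3.
          bu (bu (bu (act x1 y1) (Sa (act x3 y3))) x4) y4))))"
    by (rule ssum_cong) (rule ssum_swap)
  also have "\<dots> = ssum (cop x)(\<lambda>p x4. ssum (cop y)(\<lambda>q y4. ssum (cop (act p q)) (\<lambda>z1 z2.
          bu (bu (bu z1 (Sa z2)) x4) y4)))"
    by (intro ssum_cong) (rule cop_act_ssum[OF sc_vector_space, symmetric], simp add: bilin_def)
  also have "\<dots> = ssum (cop x)(\<lambda>p x4. ssum (cop y)(\<lambda>q y4. sc (cou p) (sc (cou q) (bu x4 y4))))"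
    by (simp add: Sr_antipode_right cou_act mult.commute flip: ssum_distribs)
  also have "\<dots> = bu x y"
    by (simp only: sc_mult[symmetric]) (rule counit2_left[OF bul_bilin])
  finally show ?thesis by simp
qed

lemma Sr_act_eq_lhp: "ssum (cop x)(\<lambda>x1 x2. ssum (cop y)(\<lambda>y1 y2. bu (bu (lh x1 y1) (Sa y2)) (Sa x2))) = Sa (act x y)"
proof -
  have "ssum (cop x)(\<lambda>x1 x2. ssum (cop y)(\<lambda>y1 y2. bu (bu (lh x1 y1) (Sa y2)) (Sa x2)))
     = ssum (cop x)(\<lambda>x1 x2. ssum (cop y)(\<lambda>y1 y2. ssum (cop x1)(\<lambda>a c. ssum (cop y1)(\<lambda>b d.
          bu (Sa (act a b)) (bu c (bu (bu d (Sa y2)) (Sa x2)))))))"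
    unfolding lhp_eq by (simp add: ssum_distribs bul_assoc)
  also have "\<dots> = ssum (cop x)(\<lambda>x1 x2. ssum (cop x1)(\<lambda>a c. ssum (cop y)(\<lambda>y1 y2. ssum (cop y1)(\<lambda>b d.
          bu (Sa (act a b)) (bu c (bu (bu d (Sa y2)) (Sa x2)))))))"
    by (rule ssum_cong) (rule ssum_swap)
  also have "\<dots> = ssum (cop x)(\<lambda>a r. ssum (cop r)(\<lambda>c x2. ssum (cop y)(\<lambda>y1 y2. ssum (cop y1)(\<lambda>b d.
          bu (Sa (act a b)) (bu c (bu (bu d (Sa y2)) (Sa x2)))))))"
    by (rule coassoc_H) (simp add: trilin_def bilin_def)
  also have "\<dots> = ssum (cop x)(\<lambda>a r. ssum (cop r)(\<lambda>c x2. ssum (cop y)(\<lambda>b s. ssum (cop s)(\<lambda>d y2.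
          bu (Sa (act a b)) (bu c (bu (bu d (Sa y2)) (Sa x2)))))))"
    by (rule ssum_cong, rule ssum_cong, rule coassoc_H, simp add: trilin_def bilin_def)
  also have "\<dots> = ssum (cop x)(\<lambda>a r. ssum (cop r)(\<lambda>c x2. ssum (cop y)(\<lambda>b s. sc (cou s) (
          bu (Sa (act a b)) (bu c (Sa x2))))))"
    by (simp add: Sr_antipode_right flip: ssum_distribs)
  also have "\<dots> = ssum (cop x)(\<lambda>a r. ssum (cop r)(\<lambda>c x2. bu (Sa (act a y)) (bu c (Sa x2))))"
    by (intro ssum_cong) (rule counit_right_H, simp)
  also have "\<dots> = ssum (cop x)(\<lambda>a r. sc (cou r) (Sa (act a y)))"
    by (simp add: Sr_antipode_right flip: ssum_distribs)
  also have "\<dots> = Sa (act x y)"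
    by (rule counit_right_H) simp
  finally show ?thesis .
qed

section \<open>The Yetter--Drinfeld coaction\<close>

lemma coact_ssum: "ssum (rho a) G = ssum (cop a)(\<lambda>p a3. ssum (cop p)(\<lambda>a1 a2. G (bu a1 (Sa a3)) a2))"
  by (simp add: yd_coact_def lw3_def)

lemma coact_ssum_assoc: assumes W: "vector_space sW" and G: "bilin sc sc sW G"
  shows "ssum (rho a) G = ssum (cop a)(\<lambda>a1 r. ssum (cop r)(\<lambda>a2 a3. G (bu a1 (Sa a3)) a2))"
proof -
  interpret W: vector_space sW by fact
  note [simp] = W
  have G1: "lin sc sW (\<lambda>w. G w z)" for z using G by (simp add: bilin_def)
  have G2: "lin sc sW (G w)" for w using G by (simp add: bilin_def)
  show ?thesis unfolding coact_ssum
    by (rule coassoc[OF W]) (simp add: trilin_def bilin_def lin_comp[OF G1] lin_comp[OF G2])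
qed

lemma lin_ssum_coact: "vector_space sW \<Longrightarrow> bilin sc sc sW G \<Longrightarrow> lin sc sW (\<lambda>u. ssum (rho u) G)"
proof -
  assume W: "vector_space sW" and G: "bilin sc sc sW G"
  note [simp] = W
  have G1: "lin sc sW (\<lambda>w. G w z)" for z using G by (simp add: bilin_def)
  have G2: "lin sc sW (G w)" for w using G by (simp add: bilin_def)
  show ?thesis unfolding coact_ssum by (simp add: bilin_def lin_comp[OF G1] lin_comp[OF G2])
qed

lemma coact_add: "teq2 sc sc (rho (v + w)) (rho v @ rho w)"
  by (rule teq2I) (simp add: lin_add[OF lin_ssum_coact[OF vector_space_mult]])

lemma coact_scale: "teq2 sc sc (rho (sc c v)) (map (\<lambda>(h, w). (sc c h, w)) (rho v))"
proof (rule teq2I)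
  fix \<phi> :: "'h \<Rightarrow> 'h \<Rightarrow> 'f" assume \<phi>: "bilin sc sc (*) \<phi>"
  show "ssum (rho (sc c v)) \<phi> = ssum (map (\<lambda>(h, w). (sc c h, w)) (rho v)) \<phi>"
    by (simp add: ssum_map1 lin_scale[OF lin_ssum_coact[OF vector_space_mult \<phi>]] bilin_scL[OF \<phi>] ssum_scale[OF vector_space_mult])
qed

lemma coact_counit: "ssum (rho v) (\<lambda>h w. sc (cou h) w) = v"
proof -
  have "ssum (rho v) (\<lambda>h w. sc (cou h) w) = ssum (cop v)(\<lambda>p a3. ssum (cop p)(\<lambda>a1 a2. sc (cou (bu a1 (Sa a3))) a2))"
    by (simp add: coact_ssum)
  also have "\<dots> = ssum (cop v)(\<lambda>p a3. sc (cou a3) (ssum (cop p)(\<lambda>a1 a2. sc (cou a1) a2)))"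
    by (intro ssum_cong) (simp add: cou_bul mult.commute counit_scaled)
  also have "\<dots> = v" by (simp add: counit)
  finally show ?thesis .
qed

lemma coact_one: "teq2 sc sc (rho one) [(one, one)]"
proof (rule teq2I)
  fix \<phi> :: "'h \<Rightarrow> 'h \<Rightarrow> 'f" assume \<phi>: "bilin sc sc (*) \<phi>"
  note P = lin_comp[OF bilinD2[OF \<phi>]] lin_comp[OF bilinD1[OF \<phi>]]
  show "ssum (rho one) \<phi> = ssum [(one, one)] \<phi>"
    by (simp add: coact_ssum bilin_def P)
qed

lemma cou_coact: "ssum (rho x) (\<lambda>h v. sc (cou v) h) = sc (cou x) one"
proof -
  have "ssum (rho x) (\<lambda>h v. sc (cou v) h) = ssum (cop x)(\<lambda>p a3. ssum (cop p)(\<lambda>a1 a2. sc (cou a2) (bu a1 (Sa a3))))"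
    by (simp add: coact_ssum)
  also have "\<dots> = ssum (cop x)(\<lambda>p a3. bu p (Sa a3))"
    by (rule ssum_cong) (rule counit_right_H, simp)
  finally show ?thesis by (simp add: Sr_antipode_right)
qed

lemma coact_coassoc: "teq3 sc sc sc
            (lsum (rho v) (\<lambda>h w. map (\<lambda>(h1, h2). (h1, h2, w)) (cop h)))
            (lsum (rho v) (\<lambda>h w. map (\<lambda>(h', w'). (h, h', w')) (rho w)))"
proof (rule teq3I)
  fix \<phi> :: "'h \<Rightarrow> 'h \<Rightarrow> 'h \<Rightarrow> 'f" assume \<phi>: "trilin sc sc sc (*) \<phi>"
  note P = lin_comp[OF trilin_linD(1)[OF \<phi>]] lin_comp[OF trilin_linD(2)[OF \<phi>]] lin_comp[OF trilin_linD(3)[OF \<phi>]]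
  let ?N = "ssum (cop v)(\<lambda>x1 r1. ssum (cop r1)(\<lambda>x2 r2. ssum (cop r2)(\<lambda>x3 r3. ssum (cop r3)(\<lambda>x4 x5.
      \<phi> (bu x1 (Sa x5)) (bu x2 (Sa x4)) x3))))"
  have "ssum3 (lsum (rho v) (\<lambda>h w. map (\<lambda>(h1, h2). (h1, h2, w)) (cop h))) \<phi>
      = ssum (rho v) (\<lambda>h w. ssum (cop h) (\<lambda>h1 h2. \<phi> h1 h2 w))"
    by simp
  also have "\<dots> = ssum (cop v)(\<lambda>a1 r. ssum (cop r)(\<lambda>a2 a3. ssum (cop (bu a1 (Sa a3))) (\<lambda>h1 h2. \<phi> h1 h2 a2)))"
    by (rule coact_ssum_assoc[OF vector_space_mult]) (simp add: bilin_def P)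
  also have "\<dots> = ssum (cop v)(\<lambda>a1 r. ssum (cop r)(\<lambda>a2 a3. ssum (cop a1)(\<lambda>p q. ssum (cop a3)(\<lambda>e f.
       \<phi> (bu p (Sa f)) (bu q (Sa e)) a2))))"
    by (intro ssum_cong) (simp add: cop_bul_ssum[OF vector_space_mult] cop_Sr_ssum[OF vector_space_mult] bilin_def P)
  also have "\<dots> = ssum (cop v)(\<lambda>a1 r. ssum (cop a1)(\<lambda>p q. ssum (cop r)(\<lambda>a2 a3. ssum (cop a3)(\<lambda>e f.
       \<phi> (bu p (Sa f)) (bu q (Sa e)) a2))))"
    by (rule ssum_cong) (rule ssum_swap)
  also have "\<dots> = ?N"
    by (rule coassoc_scalar) (simp add: trilin_def bilin_def P)
  finally have L: "ssum3 (lsum (rho v) (\<lambda>h w. map (\<lambda>(h1, h2). (h1, h2, w)) (cop h))) \<phi> = ?N" .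
  have "ssum3 (lsum (rho v) (\<lambda>h w. map (\<lambda>(h', w'). (h, h', w')) (rho w))) \<phi>
     = ssum (rho v) (\<lambda>h w. ssum (rho w) (\<lambda>h' w'. \<phi> h h' w'))"
    by simp
  also have "\<dots> = ssum (cop v)(\<lambda>a1 r. ssum (cop r)(\<lambda>a2 a3. ssum (cop a2)(\<lambda>b1 s. ssum (cop s)(\<lambda>b2 b3.
        \<phi> (bu a1 (Sa a3)) (bu b1 (Sa b3)) b2))))"
    by (simp add: coact_ssum_assoc[OF vector_space_mult] bilin_def P)
  also have "\<dots> = ssum (cop v)(\<lambda>a1 r. ssum (cop r)(\<lambda>b1 t. ssum (cop t)(\<lambda>s a3. ssum (cop s)(\<lambda>b2 b3.
        \<phi> (bu a1 (Sa a3)) (bu b1 (Sa b3)) b2))))"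
    by (rule ssum_cong) (rule coassoc_scalar, simp add: trilin_def bilin_def P)
  also have "\<dots> = ?N"
    by (rule ssum_cong, rule ssum_cong, rule coassoc_scalar, simp add: trilin_def bilin_def P)
  finally show "ssum3 (lsum (rho v) (\<lambda>h w. map (\<lambda>(h1, h2). (h1, h2, w)) (cop h))) \<phi> =
     ssum3 (lsum (rho v) (\<lambda>h w. map (\<lambda>(h', w'). (h, h', w')) (rho w))) \<phi>" using L by simp
qed

lemma yd_compat_lhs:
  assumes \<phi>: "bilin sc sc (*) \<phi>"
  shows "ssum (rho (act a v)) \<phi> = ssum (cop a)(\<lambda>a1 r. ssum (cop r)(\<lambda>a2 a3. ssum (cop v)(\<lambda>v1 s.
      ssum (cop s)(\<lambda>v2 v3. \<phi> (bu (act a1 v1) (Sa (act a3 v3))) (act a2 v2)))))"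
proof -
  note P = lin_comp[OF bilinD2[OF \<phi>]] lin_comp[OF bilinD1[OF \<phi>]]
  have "ssum (rho (act a v)) \<phi> = ssum (cop a)(\<lambda>p a3. ssum (cop v)(\<lambda>q v3. ssum (cop p)(\<lambda>a1 a2.
      ssum (cop q)(\<lambda>v1 v2. \<phi> (bu (act a1 v1) (Sa (act a3 v3))) (act a2 v2)))))"
    unfolding coact_ssum by (simp add: cop_act_ssum[OF vector_space_mult] bilin_def P)
  also have "\<dots> = ssum (cop a)(\<lambda>p a3. ssum (cop p)(\<lambda>a1 a2. ssum (cop v)(\<lambda>q v3.
      ssum (cop q)(\<lambda>v1 v2. \<phi> (bu (act a1 v1) (Sa (act a3 v3))) (act a2 v2)))))"
    by (intro ssum_cong) (rule ssum_swap)
  also have "\<dots> = ssum (cop a)(\<lambda>a1 r. ssum (cop r)(\<lambda>a2 a3. ssum (cop v)(\<lambda>q v3.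
      ssum (cop q)(\<lambda>v1 v2. \<phi> (bu (act a1 v1) (Sa (act a3 v3))) (act a2 v2)))))"
    by (rule coassoc_scalar) (simp add: trilin_def bilin_def P)
  also have "\<dots> = ssum (cop a)(\<lambda>a1 r. ssum (cop r)(\<lambda>a2 a3. ssum (cop v)(\<lambda>v1 s.
      ssum (cop s)(\<lambda>v2 v3. \<phi> (bu (act a1 v1) (Sa (act a3 v3))) (act a2 v2)))))"
    by (rule ssum_cong, rule ssum_cong, rule coassoc_scalar) (simp add: trilin_def bilin_def P)
  finally show ?thesis .
qed

lemma yd_compat_rhs_factor:
  assumes \<phi>: "bilin sc sc (*) \<phi>"
  shows "ssum (lw3 cop a (\<lambda>a1 a2 a3. lsum (rho v) (\<lambda>h w. [(bu (bu a1 h) (Sa a3), act a2 w)]))) \<phi>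
    = ssum (cop a)(\<lambda>a1 r. ssum (cop r)(\<lambda>a2 a3. ssum (cop v)(\<lambda>v1 s. ssum (cop s)(\<lambda>v2 v3.
        ssum (cop a1)(\<lambda>x1 x2. ssum (cop v1)(\<lambda>y1 y2.
          \<phi> (bu (bu (bu (act x1 y1) (lh x2 y2)) (Sa v3)) (Sa a3)) (act a2 v2)))))))"
proof -
  note P = lin_comp[OF bilinD2[OF \<phi>]] lin_comp[OF bilinD1[OF \<phi>]]
  have "ssum (lw3 cop a (\<lambda>a1 a2 a3. lsum (rho v) (\<lambda>h w. [(bu (bu a1 h) (Sa a3), act a2 w)]))) \<phi>
    = ssum (cop a)(\<lambda>p a3. ssum (cop p)(\<lambda>a1 a2. ssum (cop v)(\<lambda>q v3. ssum (cop q)(\<lambda>v1 v2.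
        \<phi> (bu (bu (bu a1 v1) (Sa v3)) (Sa a3)) (act a2 v2)))))"
    by (simp add: lw3_def coact_ssum bul_assoc)
  also have "\<dots> = ssum (cop a)(\<lambda>a1 r. ssum (cop r)(\<lambda>a2 a3. ssum (cop v)(\<lambda>q v3. ssum (cop q)(\<lambda>v1 v2.
        \<phi> (bu (bu (bu a1 v1) (Sa v3)) (Sa a3)) (act a2 v2)))))"
    by (rule coassoc_scalar) (simp add: trilin_def bilin_def P)
  also have "\<dots> = ssum (cop a)(\<lambda>a1 r. ssum (cop r)(\<lambda>a2 a3. ssum (cop v)(\<lambda>v1 s. ssum (cop s)(\<lambda>v2 v3.
        \<phi> (bu (bu (bu a1 v1) (Sa v3)) (Sa a3)) (act a2 v2)))))"
    by (rule ssum_cong, rule ssum_cong, rule coassoc_scalar) (simp add: trilin_def bilin_def P)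
  also have "\<dots> = ssum (cop a)(\<lambda>a1 r. ssum (cop r)(\<lambda>a2 a3. ssum (cop v)(\<lambda>v1 s. ssum (cop s)(\<lambda>v2 v3.
        ssum (cop a1)(\<lambda>x1 x2. ssum (cop v1)(\<lambda>y1 y2.
          \<phi> (bu (bu (bu (act x1 y1) (lh x2 y2)) (Sa v3)) (Sa a3)) (act a2 v2)))))))"
    by (intro ssum_cong)
      (subst bul_eq_act_bul_lhp, simp add: lin_ssum_distrib[OF bilinD2[OF \<phi>]] ssum_distribs)
  finally show ?thesis .
qed

lemma yd_compat_rhs_reindex:
  assumes \<phi>: "bilin sc sc (*) \<phi>"
  shows "ssum (cop a)(\<lambda>a1 r. ssum (cop r)(\<lambda>a2 a3. ssum (cop v)(\<lambda>v1 s. ssum (cop s)(\<lambda>v2 v3.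
        ssum (cop a1)(\<lambda>x1 x2. ssum (cop v1)(\<lambda>y1 y2.
          \<phi> (bu (bu (bu (act x1 y1) (lh x2 y2)) (Sa v3)) (Sa a3)) (act a2 v2)))))))
    = ssum (cop a)(\<lambda>x1 t. ssum (cop t)(\<lambda>w x4. ssum (cop v)(\<lambda>y1 u. ssum (cop u)(\<lambda>z y4.
        ssum (cop w)(\<lambda>x2 x3. ssum (cop z)(\<lambda>y2 y3.
          \<phi> (bu (bu (bu (act x1 y1) (lh x2 y2)) (Sa y4)) (Sa x4)) (act x3 y3)))))))"
    (is "?lhs = _")
proof -
  note P = lin_comp[OF bilinD2[OF \<phi>]] lin_comp[OF bilinD1[OF \<phi>]]
  let ?E = "\<lambda>x1 x2 x3 x4 y1 y2 y3 y4.
     \<phi> (bu (bu (bu (act x1 y1) (lh x2 y2)) (Sa y4)) (Sa x4)) (act x3 y3)"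
  have "?lhs = ssum (cop a)(\<lambda>a1 r. ssum (cop r)(\<lambda>a2 a3. ssum (cop v)(\<lambda>v1 s.
      ssum (cop a1)(\<lambda>x1 x2. ssum (cop s)(\<lambda>v2 v3. ssum (cop v1)(\<lambda>y1 y2. ?E x1 x2 a2 a3 y1 y2 v2 v3))))))"
    by (intro ssum_cong) (rule ssum_swap)
  also have "\<dots> = ssum (cop a)(\<lambda>a1 r. ssum (cop r)(\<lambda>a2 a3. ssum (cop a1)(\<lambda>x1 x2.
      ssum (cop v)(\<lambda>v1 s. ssum (cop s)(\<lambda>v2 v3. ssum (cop v1)(\<lambda>y1 y2. ?E x1 x2 a2 a3 y1 y2 v2 v3))))))"
    by (intro ssum_cong) (rule ssum_swap)
  also have "\<dots> = ssum (cop a)(\<lambda>a1 r. ssum (cop a1)(\<lambda>x1 x2. ssum (cop r)(\<lambda>a2 a3.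
      ssum (cop v)(\<lambda>v1 s. ssum (cop s)(\<lambda>v2 v3. ssum (cop v1)(\<lambda>y1 y2. ?E x1 x2 a2 a3 y1 y2 v2 v3))))))"
    by (intro ssum_cong) (rule ssum_swap)
  also have "\<dots> = ssum (cop a)(\<lambda>x1 t. ssum (cop t)(\<lambda>x2 r. ssum (cop r)(\<lambda>a2 a3.
      ssum (cop v)(\<lambda>v1 s. ssum (cop s)(\<lambda>v2 v3. ssum (cop v1)(\<lambda>y1 y2. ?E x1 x2 a2 a3 y1 y2 v2 v3))))))"
    by (rule coassoc_scalar) (simp add: trilin_def bilin_def P)
  also have "\<dots> = ssum (cop a)(\<lambda>x1 t. ssum (cop t)(\<lambda>w x4. ssum (cop w)(\<lambda>x2 x3.
      ssum (cop v)(\<lambda>v1 s. ssum (cop s)(\<lambda>v2 v3. ssum (cop v1)(\<lambda>y1 y2. ?E x1 x2 x3 x4 y1 y2 v2 v3))))))"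
    by (rule ssum_cong, rule coassoc_scalar[symmetric]) (simp add: trilin_def bilin_def P)
  also have "\<dots> = ssum (cop a)(\<lambda>x1 t. ssum (cop t)(\<lambda>w x4. ssum (cop w)(\<lambda>x2 x3.
      ssum (cop v)(\<lambda>v1 s. ssum (cop v1)(\<lambda>y1 y2. ssum (cop s)(\<lambda>v2 v3. ?E x1 x2 x3 x4 y1 y2 v2 v3))))))"
    by (intro ssum_cong) (rule ssum_swap)
  also have "\<dots> = ssum (cop a)(\<lambda>x1 t. ssum (cop t)(\<lambda>w x4. ssum (cop w)(\<lambda>x2 x3.
      ssum (cop v)(\<lambda>y1 u. ssum (cop u)(\<lambda>y2 s. ssum (cop s)(\<lambda>v2 v3. ?E x1 x2 x3 x4 y1 y2 v2 v3))))))"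
    by (rule ssum_cong, rule ssum_cong, rule ssum_cong, rule coassoc_scalar) (simp add: trilin_def bilin_def P)
  also have "\<dots> = ssum (cop a)(\<lambda>x1 t. ssum (cop t)(\<lambda>w x4. ssum (cop w)(\<lambda>x2 x3.
      ssum (cop v)(\<lambda>y1 u. ssum (cop u)(\<lambda>z y4. ssum (cop z)(\<lambda>y2 y3. ?E x1 x2 x3 x4 y1 y2 y3 y4))))))"
    by (rule ssum_cong, rule ssum_cong, rule ssum_cong, rule ssum_cong, rule coassoc_scalar[symmetric])
      (simp add: trilin_def bilin_def P)
  also have "\<dots> = ssum (cop a)(\<lambda>x1 t. ssum (cop t)(\<lambda>w x4. ssum (cop v)(\<lambda>y1 u. ssum (cop u)(\<lambda>z y4.
      ssum (cop w)(\<lambda>x2 x3. ssum (cop z)(\<lambda>y2 y3. ?E x1 x2 x3 x4 y1 y2 y3 y4))))))"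
    by (intro ssum_cong) (subst ssum_swap, intro ssum_cong, rule ssum_swap)
  finally show ?thesis .
qed

text \<open>The only step that is not coalgebra bookkeeping: the braided symmetry of (P6) exchanges
the roles of \<open>x\<^sub>2, y\<^sub>2\<close> and \<open>x\<^sub>3, y\<^sub>3\<close> between \<open>\<rightharpoonup>\<close> and \<open>\<leftharpoonup>\<close>, after which
\<open>(x\<^sub>3 \<leftharpoonup> y\<^sub>3) \<bullet> S\<^sub>\<rightharpoonup>(y\<^sub>4) \<bullet> S\<^sub>\<rightharpoonup>(x\<^sub>4)\<close> collapses to \<open>S\<^sub>\<rightharpoonup>(x\<^sub>3 \<rightharpoonup> y\<^sub>3)\<close>.\<close>

lemma yd_compat_rhs_collapse:
  assumes \<phi>: "bilin sc sc (*) \<phi>"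
  shows "ssum (cop a)(\<lambda>x1 t. ssum (cop t)(\<lambda>w x4. ssum (cop v)(\<lambda>y1 u. ssum (cop u)(\<lambda>z y4.
        ssum (cop w)(\<lambda>x2 x3. ssum (cop z)(\<lambda>y2 y3.
          \<phi> (bu (bu (bu (act x1 y1) (lh x2 y2)) (Sa y4)) (Sa x4)) (act x3 y3)))))))
    = ssum (cop a)(\<lambda>a1 r. ssum (cop r)(\<lambda>a2 a3. ssum (cop v)(\<lambda>v1 s.
      ssum (cop s)(\<lambda>v2 v3. \<phi> (bu (act a1 v1) (Sa (act a3 v3))) (act a2 v2)))))"
    (is "?lhs = _")
proof -
  note P = lin_comp[OF bilinD2[OF \<phi>]] lin_comp[OF bilinD1[OF \<phi>]]
  let ?E = "\<lambda>x1 x2 x3 x4 y1 y2 y3 y4.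
     \<phi> (bu (bu (bu (act x1 y1) (lh x2 y2)) (Sa y4)) (Sa x4)) (act x3 y3)"
  have "?lhs = ssum (cop a)(\<lambda>x1 t. ssum (cop t)(\<lambda>w x4. ssum (cop v)(\<lambda>y1 u. ssum (cop u)(\<lambda>z y4.
      ssum (cop w)(\<lambda>x2 x3. ssum (cop z)(\<lambda>y2 y3. ?E x1 x3 x2 x4 y1 y3 y2 y4))))))"
    apply (rule ssum_cong, rule ssum_cong, rule ssum_cong, rule ssum_cong)
    subgoal for x1 t w x4 y1 u z y4
      by (rule act_lhp_swap_ssum[OF vector_space_mult,
            where K="\<lambda>p q. \<phi> (bu (bu (bu (act x1 y1) q) (Sa y4)) (Sa x4)) p", symmetric])
        (simp add: bilin_def P)
    done
  also have "\<dots> = ssum (cop a)(\<lambda>x1 t. ssum (cop t)(\<lambda>w x4. ssum (cop w)(\<lambda>x2 x3.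
      ssum (cop v)(\<lambda>y1 u. ssum (cop u)(\<lambda>z y4. ssum (cop z)(\<lambda>y2 y3. ?E x1 x3 x2 x4 y1 y3 y2 y4))))))"
    by (intro ssum_cong) (subst ssum_swap, intro ssum_cong, rule ssum_swap)
  also have "\<dots> = ssum (cop a)(\<lambda>x1 t. ssum (cop t)(\<lambda>x2 m. ssum (cop m)(\<lambda>x3 x4.
      ssum (cop v)(\<lambda>y1 u. ssum (cop u)(\<lambda>y2 n. ssum (cop n)(\<lambda>y3 y4. ?E x1 x3 x2 x4 y1 y3 y2 y4))))))"
    by (rule ssum_cong, rule coassoc_scalar[THEN trans], simp add: trilin_def bilin_def P)
      (rule ssum_cong, rule ssum_cong, rule ssum_cong, rule coassoc_scalar, simp add: trilin_def bilin_def P)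
  also have "\<dots> = ssum (cop a)(\<lambda>x1 t. ssum (cop t)(\<lambda>x2 m. ssum (cop v)(\<lambda>y1 u. ssum (cop u)(\<lambda>y2 n.
      ssum (cop m)(\<lambda>x3 x4. ssum (cop n)(\<lambda>y3 y4. ?E x1 x3 x2 x4 y1 y3 y2 y4))))))"
    by (intro ssum_cong) (subst ssum_swap, intro ssum_cong, rule ssum_swap)
  also have "\<dots> = ssum (cop a)(\<lambda>a1 r. ssum (cop r)(\<lambda>a2 a3. ssum (cop v)(\<lambda>v1 s.
      ssum (cop s)(\<lambda>v2 v3. \<phi> (bu (act a1 v1) (Sa (act a3 v3))) (act a2 v2)))))"
    by (intro ssum_cong)
      (simp add: bul_assoc flip: Sr_act_eq_lhp lin_ssum_distrib[OF bilinD2[OF \<phi>]] ssum_distribs)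
  finally show ?thesis .
qed

lemma coact_act: "teq2 sc sc (rho (act a v))
            (lw3 cop a (\<lambda>a1 a2 a3. lsum (rho v) (\<lambda>h w. [(bu (bu a1 h) (Sa a3), act a2 w)])))"
  by (rule teq2I) (simp only: yd_compat_lhs yd_compat_rhs_factor yd_compat_rhs_reindex yd_compat_rhs_collapse)

lemma coact_act_ssum: assumes G: "bilin sc sc (*) G"
  shows "ssum (rho (act a v)) G = ssum (cop a)(\<lambda>p a3. ssum (cop p)(\<lambda>a1 a2. ssum (rho v)(\<lambda>h w. G (bu (bu a1 h) (Sa a3)) (act a2 w))))"
  using teq2_ssum_eq[OF vector_space_mult coact_act G] by (simp add: lw3_def)

lemma coact_yd_module: "is_yd_module B sc act rho"
  unfolding is_yd_module_def
  using sc_vector_space act_bilin act_act coact_add coact_scale coact_coassoc coact_counit coact_act by simp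

lemma coact_bul_ssum: assumes G: "bilin sc sc (*) G"
  shows "ssum (rho (bu p w)) G = ssum (cop p)(\<lambda>p1 r. ssum (cop r)(\<lambda>p2 p3. ssum (rho w)(\<lambda>h v. G (bu (bu p1 h) (Sa p3)) (bu p2 v))))"
proof -
  note P = lin_comp[OF bilinD2[OF G]] lin_comp[OF bilinD1[OF G]]
  have "ssum (rho (bu p w)) G = ssum (cop p)(\<lambda>pa p3. ssum (cop w)(\<lambda>wa w3. ssum (cop pa)(\<lambda>p1 p2. ssum (cop wa)(\<lambda>w1 w2.
          G (bu (bu p1 (bu w1 (Sa w3))) (Sa p3)) (bu p2 w2)))))"
    unfolding coact_ssum by (simp add: cop_bul_ssum[OF vector_space_mult] bilin_def P Sr_bul bul_assoc)
  also have "\<dots> = ssum (cop p)(\<lambda>pa p3. ssum (cop pa)(\<lambda>p1 p2. ssum (cop w)(\<lambda>wa w3. ssum (cop wa)(\<lambda>w1 w2.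
          G (bu (bu p1 (bu w1 (Sa w3))) (Sa p3)) (bu p2 w2)))))"
    by (intro ssum_cong) (rule ssum_swap)
  also have "\<dots> = ssum (cop p)(\<lambda>p1 r. ssum (cop r)(\<lambda>p2 p3. ssum (cop w)(\<lambda>wa w3. ssum (cop wa)(\<lambda>w1 w2.
          G (bu (bu p1 (bu w1 (Sa w3))) (Sa p3)) (bu p2 w2)))))"
    by (rule coassoc_scalar) (simp add: trilin_def bilin_def P)
  also have "\<dots> = ssum (cop p)(\<lambda>p1 r. ssum (cop r)(\<lambda>p2 p3. ssum (rho w)(\<lambda>h v. G (bu (bu p1 h) (Sa p3)) (bu p2 v))))"
    unfolding coact_ssum by simp
  finally show ?thesis .
qed

text \<open>Expand \<open>x \<cdot> y = x\<^sub>1 \<bullet> (S\<^sub>\<rightharpoonup>(x\<^sub>2) \<rightharpoonup> y)\<close> and use that the coaction is compatible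
with \<open>\<bullet>\<close> and with the action.\<close>

lemma coact_mul_lhs:
  assumes \<phi>: "bilin sc sc (*) \<phi>"
  shows "ssum (rho (mul x y)) \<phi> = ssum (cop x)(\<lambda>a1 t. ssum (cop t)(\<lambda>a2 s. ssum (cop s)(\<lambda>c d. ssum (rho y)(\<lambda>k u.
      \<phi> (bu (bu a1 (Sa d)) k) (bu a2 (act (Sa c) u))))))"
    (is "_ = ?N")
proof -
  note P = lin_comp[OF bilinD2[OF \<phi>]] lin_comp[OF bilinD1[OF \<phi>]]
  have rl: "lin sc (*) (\<lambda>u. ssum (rho u) G)" if "bilin sc sc (*) G" for G
    by (rule lin_ssum_coact[OF vector_space_mult that])
  have "ssum (rho (mul x y)) \<phi> = ssum (cop x)(\<lambda>a b. ssum (rho (bu a (act (Sa b) y))) \<phi>)"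
    unfolding mul_eq_bul_act_Sr[of x y] by (rule lin_ssum_distrib[OF rl[OF \<phi>]])
  also have "\<dots> = ssum (cop x)(\<lambda>a b. ssum (cop a)(\<lambda>a1 r. ssum (cop r)(\<lambda>a2 a3.
       ssum (cop b)(\<lambda>b1 b2. ssum (cop b2)(\<lambda>c d. ssum (rho y)(\<lambda>k u.
         \<phi> (bu (bu (bu a1 (Sa d)) k) (Sa (bu a3 (Sa b1)))) (bu a2 (act (Sa c) u))))))))"
    apply (rule ssum_cong)
    apply (subst coact_bul_ssum[OF \<phi>])
    apply (simp add: coact_act_ssum bilin_def P cop_Sr_ssum[OF vector_space_mult] Sr_bul bul_assoc lin_ssum_coact[OF vector_space_mult])
    done
  also have "\<dots> = ssum (cop x)(\<lambda>a1 t. ssum (cop t)(\<lambda>r b. ssum (cop r)(\<lambda>a2 a3.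
       ssum (cop b)(\<lambda>b1 b2. ssum (cop b2)(\<lambda>c d. ssum (rho y)(\<lambda>k u.
         \<phi> (bu (bu (bu a1 (Sa d)) k) (Sa (bu a3 (Sa b1)))) (bu a2 (act (Sa c) u))))))))"
    by (rule coassoc_scalar) (simp add: trilin_def bilin_def P lin_ssum_coact[OF vector_space_mult])
  also have "\<dots> = ssum (cop x)(\<lambda>a1 t. ssum (cop t)(\<lambda>a2 t2. ssum (cop t2)(\<lambda>a3 b.
       ssum (cop b)(\<lambda>b1 b2. ssum (cop b2)(\<lambda>c d. ssum (rho y)(\<lambda>k u.
         \<phi> (bu (bu (bu a1 (Sa d)) k) (Sa (bu a3 (Sa b1)))) (bu a2 (act (Sa c) u))))))))"
    by (rule ssum_cong, rule coassoc_scalar) (simp add: trilin_def bilin_def P lin_ssum_coact[OF vector_space_mult])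
  also have "\<dots> = ssum (cop x)(\<lambda>a1 t. ssum (cop t)(\<lambda>a2 t2. ssum (cop t2)(\<lambda>m b2. ssum (cop m)(\<lambda>a3 b1.
       ssum (cop b2)(\<lambda>c d. ssum (rho y)(\<lambda>k u.
         \<phi> (bu (bu (bu a1 (Sa d)) k) (Sa (bu a3 (Sa b1)))) (bu a2 (act (Sa c) u))))))))"
    by (rule ssum_cong, rule ssum_cong, rule coassoc_scalar[symmetric]) (simp add: trilin_def bilin_def P lin_ssum_coact[OF vector_space_mult])
  also have "\<dots> = ssum (cop x)(\<lambda>a1 t. ssum (cop t)(\<lambda>a2 t2. ssum (cop t2)(\<lambda>m b2.
       ssum (cop b2)(\<lambda>c d. ssum (rho y)(\<lambda>k u. ssum (cop m)(\<lambda>a3 b1.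
         \<phi> (bu (bu (bu a1 (Sa d)) k) (Sa (bu a3 (Sa b1)))) (bu a2 (act (Sa c) u))))))))"
    by (intro ssum_cong) (subst ssum_swap, intro ssum_cong, rule ssum_swap)
  also have "\<dots> = ssum (cop x)(\<lambda>a1 t. ssum (cop t)(\<lambda>a2 t2. ssum (cop t2)(\<lambda>m b2. cou m *
       ssum (cop b2)(\<lambda>c d. ssum (rho y)(\<lambda>k u.
         \<phi> (bu (bu a1 (Sa d)) k) (bu a2 (act (Sa c) u)))))))"
    by (simp add: Sr_antipode_right bilin_scL[OF \<phi>] ssum_scale[OF vector_space_mult]
        flip: ssum_distribs lin_ssum_distrib[OF bilinD2[OF \<phi>]])
  also have "\<dots> = ?N"
    by (rule ssum_cong, rule ssum_cong, rule counit_left_scalar, simp add: bilin_def P lin_ssum_coact[OF vector_space_mult])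
  finally show ?thesis .
qed

lemma coact_mul:
  "teq2 sc sc (rho (mul x y)) (lsum (rho x) (\<lambda>h v. lsum (rho y) (\<lambda>h' w. [(bu h h', mul v w)])))"
proof (rule teq2I)
  fix \<phi> :: "'h \<Rightarrow> 'h \<Rightarrow> 'f" assume \<phi>: "bilin sc sc (*) \<phi>"
  note P = lin_comp[OF bilinD2[OF \<phi>]] lin_comp[OF bilinD1[OF \<phi>]]
  have "ssum (lsum (rho x) (\<lambda>h v. lsum (rho y) (\<lambda>h' w. [(bu h h', mul v w)]))) \<phi>
     = ssum (cop x)(\<lambda>p x3. ssum (cop p)(\<lambda>x1 x2. ssum (cop x2)(\<lambda>e f. ssum (rho y)(\<lambda>k u.
          \<phi> (bu (bu x1 (Sa x3)) k) (bu e (act (Sa f) u))))))"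
    apply (simp add: coact_ssum[of x])
    apply (intro ssum_cong)
    apply (subst mul_eq_bul_act_Sr)
    apply (simp add: lin_ssum_distrib[OF bilinD1[OF \<phi>]])
    apply (rule ssum_swap)
    done
  also have "\<dots> = ssum (cop x)(\<lambda>x1 t. ssum (cop t)(\<lambda>x2 x3. ssum (cop x2)(\<lambda>e f. ssum (rho y)(\<lambda>k u.
          \<phi> (bu (bu x1 (Sa x3)) k) (bu e (act (Sa f) u))))))"
    by (rule coassoc_scalar) (simp add: trilin_def bilin_def P lin_ssum_coact[OF vector_space_mult])
  also have "\<dots> = ssum (rho (mul x y)) \<phi>"
    unfolding coact_mul_lhs[OF \<phi>] by (rule ssum_cong, rule coassoc_scalar) (simp add: trilin_def bilin_def P lin_ssum_coact[OF vector_space_mult])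
  finally show "ssum (rho (mul x y)) \<phi> = ssum (lsum (rho x) (\<lambda>h v. lsum (rho y) (\<lambda>h' w. [(bu h h', mul v w)]))) \<phi>"
    by (rule sym)
qed

lemma cop_comodule_map: "teq3 sc sc sc
          (lsum (rho x) (\<lambda>h v. map (\<lambda>(v1, v2). (h, v1, v2)) (cop v)))
          (lsum (cop x) (\<lambda>x1 x2. lsum (rho x1) (\<lambda>h v. lsum (rho x2) (\<lambda>h' w.
              [(bu h h', v, w)]))))"
proof (rule teq3I)
  fix \<phi> :: "'h \<Rightarrow> 'h \<Rightarrow> 'h \<Rightarrow> 'f" assume \<phi>: "trilin sc sc sc (*) \<phi>"
  note P = lin_comp[OF trilin_linD(1)[OF \<phi>]] lin_comp[OF trilin_linD(2)[OF \<phi>]] lin_comp[OF trilin_linD(3)[OF \<phi>]]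
  let ?N = "ssum (cop x)(\<lambda>a1 t. ssum (cop t)(\<lambda>a2 s. ssum (cop s)(\<lambda>b2 b3. \<phi> (bu a1 (Sa b3)) a2 b2)))"
  have "ssum3 (lsum (rho x) (\<lambda>h v. map (\<lambda>(v1, v2). (h, v1, v2)) (cop v))) \<phi>
     = ssum (cop x)(\<lambda>p x3. ssum (cop p)(\<lambda>x1 x2. ssum (cop x2)(\<lambda>c d. \<phi> (bu x1 (Sa x3)) c d)))"
    by (simp add: coact_ssum)
  also have "\<dots> = ssum (cop x)(\<lambda>x1 t. ssum (cop t)(\<lambda>x2 x3. ssum (cop x2)(\<lambda>c d. \<phi> (bu x1 (Sa x3)) c d)))"
    by (rule coassoc_scalar) (simp add: trilin_def bilin_def P)
  also have "\<dots> = ?N"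
    by (rule ssum_cong, rule coassoc_scalar) (simp add: trilin_def bilin_def P)
  finally have L: "ssum3 (lsum (rho x) (\<lambda>h v. map (\<lambda>(v1, v2). (h, v1, v2)) (cop v))) \<phi> = ?N" .
  have "ssum3 (lsum (cop x) (\<lambda>x1 x2. lsum (rho x1) (\<lambda>h v. lsum (rho x2) (\<lambda>h' w. [(bu h h', v, w)])))) \<phi>
     = ssum (cop x)(\<lambda>a b. ssum (cop a)(\<lambda>a1 r. ssum (cop r)(\<lambda>a2 a3. ssum (cop b)(\<lambda>b1 s. ssum (cop s)(\<lambda>b2 b3.
         \<phi> (bu a1 (bu (bu (Sa a3) b1) (Sa b3))) a2 b2)))))"
    by (simp add: coact_ssum_assoc[OF vector_space_mult] bilin_def P bul_assoc)
  also have "\<dots> = ssum (cop x)(\<lambda>a1 t. ssum (cop t)(\<lambda>r b. ssum (cop r)(\<lambda>a2 a3. ssum (cop b)(\<lambda>b1 s. ssum (cop s)(\<lambda>b2 b3.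
         \<phi> (bu a1 (bu (bu (Sa a3) b1) (Sa b3))) a2 b2)))))"
    by (rule coassoc_scalar) (simp add: trilin_def bilin_def P)
  also have "\<dots> = ssum (cop x)(\<lambda>a1 t. ssum (cop t)(\<lambda>a2 t2. ssum (cop t2)(\<lambda>a3 b. ssum (cop b)(\<lambda>b1 s. ssum (cop s)(\<lambda>b2 b3.
         \<phi> (bu a1 (bu (bu (Sa a3) b1) (Sa b3))) a2 b2)))))"
    by (rule ssum_cong, rule coassoc_scalar) (simp add: trilin_def bilin_def P)
  also have "\<dots> = ssum (cop x)(\<lambda>a1 t. ssum (cop t)(\<lambda>a2 t2. ssum (cop t2)(\<lambda>m s. ssum (cop m)(\<lambda>a3 b1. ssum (cop s)(\<lambda>b2 b3.
         \<phi> (bu a1 (bu (bu (Sa a3) b1) (Sa b3))) a2 b2)))))"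
    by (rule ssum_cong, rule ssum_cong, rule coassoc_scalar[symmetric]) (simp add: trilin_def bilin_def P)
  also have "\<dots> = ssum (cop x)(\<lambda>a1 t. ssum (cop t)(\<lambda>a2 t2. ssum (cop t2)(\<lambda>m s. ssum (cop s)(\<lambda>b2 b3. ssum (cop m)(\<lambda>a3 b1.
         \<phi> (bu a1 (bu (bu (Sa a3) b1) (Sa b3))) a2 b2)))))"
    by (intro ssum_cong) (rule ssum_swap)
  also have "\<dots> = ssum (cop x)(\<lambda>a1 t. ssum (cop t)(\<lambda>a2 t2. ssum (cop t2)(\<lambda>m s. cou m * ssum (cop s)(\<lambda>b2 b3.
         \<phi> (bu a1 (Sa b3)) a2 b2))))"
    by (simp add: Sr_antipode_left ssum_scale[OF vector_space_mult] lin_scale[OF trilin_linD(1)[OF \<phi>]]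
        flip: ssum_distribs lin_ssum_distrib[OF trilin_linD(1)[OF \<phi>]])
  also have "\<dots> = ?N"
    by (rule ssum_cong, rule ssum_cong, rule counit_left_scalar, simp add: P bilin_def)
  finally show "ssum3 (lsum (rho x) (\<lambda>h v. map (\<lambda>(v1, v2). (h, v1, v2)) (cop v))) \<phi> =
         ssum3 (lsum (cop x) (\<lambda>x1 x2. lsum (rho x1) (\<lambda>h v. lsum (rho x2) (\<lambda>h' w. [(bu h h', v, w)])))) \<phi>"
    using L by simp
qed

lemma cop_mul_braided: "teq2 sc sc (cop (mul x y))
          (lsum (cop x) (\<lambda>x1 x2. lsum (cop y) (\<lambda>y1 y2. lsum (rho x2) (\<lambda>h v.
              [(mul x1 (act h y1), mul v y2)]))))"
proof (rule teq2I)
  fix \<phi> :: "'h \<Rightarrow> 'h \<Rightarrow> 'f" assume \<phi>: "bilin sc sc (*) \<phi>"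
  note P = lin_comp[OF bilinD2[OF \<phi>]] lin_comp[OF bilinD1[OF \<phi>]]
  let ?N = "ssum (cop x)(\<lambda>x1 t. ssum (cop t)(\<lambda>x2 b. ssum (cop b)(\<lambda>x3 x4. ssum (cop y)(\<lambda>y1 y2.
       \<phi> (mul x1 (act x2 (\<beta> x4 y1))) (mul x3 y2)))))"
  have L: "ssum (cop (mul x y)) \<phi> = ?N"
    unfolding cop_mul_ssum[OF vector_space_mult \<phi>] by (rule coassoc_scalar) (simp add: trilin_def bilin_def P)
  have "ssum (lsum (cop x) (\<lambda>x1 x2. lsum (cop y) (\<lambda>y1 y2. lsum (rho x2) (\<lambda>h v.
              [(mul x1 (act h y1), mul v y2)])))) \<phi>
      = ssum (cop x)(\<lambda>x1 x2. ssum (cop y)(\<lambda>y1 y2. ssum (cop x2)(\<lambda>m r. ssum (cop m)(\<lambda>p q.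
          \<phi> (mul x1 (act p (\<beta> r y1))) (mul q y2)))))"
    by (simp add: coact_ssum flip: act_act act_Sr)
  also have "\<dots> = ssum (cop x)(\<lambda>x1 x2. ssum (cop x2)(\<lambda>m r. ssum (cop m)(\<lambda>p q. ssum (cop y)(\<lambda>y1 y2.
          \<phi> (mul x1 (act p (\<beta> r y1))) (mul q y2)))))"
    by (intro ssum_cong) (subst ssum_swap, intro ssum_cong, rule ssum_swap)
  also have "\<dots> = ?N"
    by (rule ssum_cong, rule coassoc_scalar) (simp add: trilin_def bilin_def P)
  finally show "ssum (cop (mul x y)) \<phi> = ssum (lsum (cop x) (\<lambda>x1 x2. lsum (cop y) (\<lambda>y1 y2. lsum (rho x2) (\<lambda>h v.
              [(mul x1 (act h y1), mul v y2)])))) \<phi>" using L by simp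
qed

lemma coact_yd_bimonoid: "is_yd_bimonoid B A act rho"
  unfolding is_yd_bimonoid_def
  using coact_yd_module algebra coalgebra act_mul coact_mul coact_one cop_act cou_act cop_comodule_map cou_coact cop_mul_braided
      is_ydph[unfolded is_ydph_def] by simp

section \<open>The identity as a relative Rota--Baxter operator\<close>

lemma id_RB2: "teq2 sc sc
          (lw3 cop a (\<lambda>a1 a2 a3. lw3 cop b (\<lambda>b1 b2 b3.
             [(bu (bu (Sa (act a1 b1)) a2) b2, act a3 b3)])))
          (lw3 cop a (\<lambda>a1 a2 a3. lw3 cop b (\<lambda>b1 b2 b3.
             [(bu (bu (Sa (act a2 b2)) a3) b3, act a1 b1)])))"
proof (rule teq2I)
  fix \<phi> :: "'h \<Rightarrow> 'h \<Rightarrow> 'f" assume \<phi>: "bilin sc sc (*) \<phi>"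
  note P = lin_comp[OF bilinD2[OF \<phi>]] lin_comp[OF bilinD1[OF \<phi>]]
  let ?N = "ssum (cop a)(\<lambda>p a3. ssum (cop b)(\<lambda>q b3. \<phi> (lh a3 b3) (act p q)))"
  have "ssum (lw3 cop a (\<lambda>a1 a2 a3. lw3 cop b (\<lambda>b1 b2 b3.
             [(bu (bu (Sa (act a1 b1)) a2) b2, act a3 b3)]))) \<phi>
     = ssum (cop a)(\<lambda>p a3. ssum (cop p)(\<lambda>a1 a2. ssum (cop b)(\<lambda>q b3. ssum (cop q)(\<lambda>b1 b2.
          \<phi> (bu (bu (Sa (act a1 b1)) a2) b2) (act a3 b3)))))"
    by (simp add: lw3_def)
  also have "\<dots> = ssum (cop a)(\<lambda>p a3. ssum (cop b)(\<lambda>q b3. ssum (cop p)(\<lambda>a1 a2. ssum (cop q)(\<lambda>b1 b2.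
          \<phi> (bu (bu (Sa (act a1 b1)) a2) b2) (act a3 b3)))))"
    by (intro ssum_cong) (rule ssum_swap)
  also have "\<dots> = ssum (cop a)(\<lambda>p a3. ssum (cop b)(\<lambda>q b3. \<phi> (lh p q) (act a3 b3)))"
    unfolding lhp_eq by (simp flip: lin_ssum_distrib[OF bilinD2[OF \<phi>]])
  also have "\<dots> = ?N"
    by (rule act_lhp_swap_ssum[OF vector_space_mult, where K="\<lambda>r s. \<phi> s r", symmetric]) (simp add: bilin_def P)
  finally have L: "ssum (lw3 cop a (\<lambda>a1 a2 a3. lw3 cop b (\<lambda>b1 b2 b3.
             [(bu (bu (Sa (act a1 b1)) a2) b2, act a3 b3)]))) \<phi> = ?N" .
  have "ssum (lw3 cop a (\<lambda>a1 a2 a3. lw3 cop b (\<lambda>b1 b2 b3.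
             [(bu (bu (Sa (act a2 b2)) a3) b3, act a1 b1)]))) \<phi>
     = ssum (cop a)(\<lambda>p a3. ssum (cop p)(\<lambda>a1 a2. ssum (cop b)(\<lambda>q b3. ssum (cop q)(\<lambda>b1 b2.
          \<phi> (bu (bu (Sa (act a2 b2)) a3) b3) (act a1 b1)))))"
    by (simp add: lw3_def)
  also have "\<dots> = ssum (cop a)(\<lambda>a1 t. ssum (cop t)(\<lambda>a2 a3. ssum (cop b)(\<lambda>q b3. ssum (cop q)(\<lambda>b1 b2.
          \<phi> (bu (bu (Sa (act a2 b2)) a3) b3) (act a1 b1)))))"
    by (rule coassoc_scalar) (simp add: trilin_def bilin_def P)
  also have "\<dots> = ssum (cop a)(\<lambda>a1 t. ssum (cop t)(\<lambda>a2 a3. ssum (cop b)(\<lambda>b1 s. ssum (cop s)(\<lambda>b2 b3.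
          \<phi> (bu (bu (Sa (act a2 b2)) a3) b3) (act a1 b1)))))"
    by (rule ssum_cong, rule ssum_cong, rule coassoc_scalar) (simp add: trilin_def bilin_def P)
  also have "\<dots> = ssum (cop a)(\<lambda>a1 t. ssum (cop b)(\<lambda>b1 s. ssum (cop t)(\<lambda>a2 a3. ssum (cop s)(\<lambda>b2 b3.
          \<phi> (bu (bu (Sa (act a2 b2)) a3) b3) (act a1 b1)))))"
    by (intro ssum_cong) (rule ssum_swap)
  also have "\<dots> = ?N"
    unfolding lhp_eq by (simp flip: lin_ssum_distrib[OF bilinD2[OF \<phi>]])
  finally show "ssum (lw3 cop a (\<lambda>a1 a2 a3. lw3 cop b (\<lambda>b1 b2 b3.
             [(bu (bu (Sa (act a1 b1)) a2) b2, act a3 b3)]))) \<phi> =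
       ssum (lw3 cop a (\<lambda>a1 a2 a3. lw3 cop b (\<lambda>b1 b2 b3.
             [(bu (bu (Sa (act a2 b2)) a3) b3, act a1 b1)]))) \<phi>" using L by simp
qed

lemma act_Sr_eq_ant: "ssum (cop x)(\<lambda>a b. act a (Sa b)) = ant x"
proof -
  have "ssum (cop x)(\<lambda>a b. act a (Sa b)) = ssum (cop x)(\<lambda>a r. ssum (cop r)(\<lambda>c d. act a (\<beta> c (ant d))))"
    unfolding Sr_eq by (simp add: ssum_distribs)
  also have "\<dots> = ssum (cop x)(\<lambda>u d. ssum (cop u)(\<lambda>a c. act a (\<beta> c (ant d))))"
    by (rule coassoc_H[symmetric]) (simp add: trilin_def bilin_def)
  also have "\<dots> = ant x" by (simp add: act_beta_conv)
  finally show ?thesis .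
qed

lemma id_RB3: "sw3 cop a (\<lambda>a1 a2 a3. mul (act a1 (Sa a2)) a3) = sc (cou a) one"
proof -
  have "sw3 cop a (\<lambda>a1 a2 a3. mul (act a1 (Sa a2)) a3) = ssum (cop a)(\<lambda>p a3. mul (ant p) a3)"
    unfolding sw3_def by (simp add: act_Sr_eq_ant flip: ssum_distribs)
  then show ?thesis by (simp add: antipode)
qed

lemma id_is_yd_rrb: "is_yd_rrb B A act rho id"
  unfolding is_yd_rrb_def
  using sub_hopf_is_hopf_algebra coact_yd_bimonoid id_RB2 id_RB3
  by (simp add: id_def teq2_refl bij_id[unfolded id_def] flip: bul_eq)

end

lemma ydph_morph_bul:
  assumes "is_ydph A' act'" and "ydph_morph A act A' act' g"
  shows "g (bul A act x y) = bul A' act' (g x) (g y)"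
proof -
  interpret A': yd_post_hopf A' act' by (rule yd_post_hopf.intro) fact
  have g_lin: "lin (h_sc A) (h_sc A') g" and g_mul: "\<And>x y. g (h_mul A x y) = h_mul A' (g x) (g y)"
    and g_cop: "\<And>x. teq2 (h_sc A') (h_sc A') (h_cop A' (g x)) (map (\<lambda>(a, b). (g a, g b)) (h_cop A x))"
    and g_act: "\<And>x y. g (act x y) = act' (g x) (g y)"
    using assms(2) by (auto simp: ydph_morph_def alg_coalg_morph_def)
  have "g (bul A act x y) = ssum (map (\<lambda>(a, b). (g a, g b)) (h_cop A x)) (\<lambda>a b. h_mul A' a (act' b (g y)))"
    by (simp add: bul_def lin_ssum_distrib[OF g_lin] g_mul g_act)
  also have "\<dots> = ssum (h_cop A' (g x)) (\<lambda>a b. h_mul A' a (act' b (g y)))"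
    by (rule teq2_ssum_eq[OF A'.sc_vector_space g_cop, symmetric]) (simp add: bilin_def)
  finally show ?thesis by (simp add: bul_def)
qed

lemma ydph_morph_sub_hopf:
  assumes "is_ydph A' act'" and "ydph_morph A act A' act' g"
  shows "alg_coalg_morph (sub_hopf A act) (sub_hopf A' act') g"
  using ydph_morph_bul[OF assms] assms(2)
  by (simp add: ydph_morph_def alg_coalg_morph_def sub_hopf_def)

theorem proposition4:
  fixes A :: "('f::field, 'h::ab_group_add) halg" and act :: "'h \<Rightarrow> 'h \<Rightarrow> 'h"
    and A' :: "('f, 'g::ab_group_add) halg" and act' :: "'g \<Rightarrow> 'g \<Rightarrow> 'g"
    and g :: "'h \<Rightarrow> 'g"
  assumes "is_ydph A act"
  shows "is_yd_rrb (sub_hopf A act) A act (yd_coact A act) id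
    \<and> (is_ydph A' act' \<longrightarrow> ydph_morph A act A' act' g \<longrightarrow>
        yd_rrb_morph (sub_hopf A act) A act id (sub_hopf A' act') A' act' id g g)"
proof (intro conjI impI)
  interpret H: yd_post_hopf A act by (rule yd_post_hopf.intro[OF assms])
  show "is_yd_rrb (sub_hopf A act) A act (yd_coact A act) id" by (rule H.id_is_yd_rrb)
  assume Y: "is_ydph A' act'" and g: "ydph_morph A act A' act' g"
  show "yd_rrb_morph (sub_hopf A act) A act id (sub_hopf A' act') A' act' id g g"
    unfolding yd_rrb_morph_def using ydph_morph_sub_hopf[OF Y g] g by (simp add: ydph_morph_def)
qed

end
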